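(* Let $k>l\ge0$ be integers with $k+l\ge3$, let $\theta\in\mathbb{R}$, $\xi=e^{i\theta}$, $f:\mathbb{N}\to[0,\infty)$, and $A=\xi(a^\dagger)^ka^l+\xi^*(a^\dagger)^la^k+f(a^\dagger a)$ with domain $\mathcal{D}_0$. Assume that $f(n)n^{-(k+l)/2}$ admits an asymptotic expansion in powers of $n^{-1/2}$, $$f(n)n^{-(k+l)/2}\sim\kappa+\frac{L_1}{n^{1/2}}+\frac{L_2}{n}+\cdots$$ with $\kappa<2$. Then $A$ has deficiency indices $n_+=n_-=k-l$ (so $A$ is not essentially self-adjoint and its self-adjoint extensions are parametrized by $\mathrm{U}(k-l)$).
   Context: $\mathbb{N}=\{0,1,2,\dots\}$. $\mathcal{H}$ is a separable complex Hilbert space with orthonormal basis $(\phi_n)_{n\in\mathbb{N}}$; $\mathcal{D}_0$ is the set of finite linear combinations of the $\phi_n$. The operators $a,a^\dagger$ have domain $\mathcal{D}_0$ and act by $a\phi_n=\sqrt{n}\,\phi_{n-1}$ ($a\phi_0=0$), $a^\dagger\phi_n=\sqrt{n+1}\,\phi_{n+1}$, extended linearly. $f(a^\dagger a)$ has domain $\mathcal{D}_0$ and $f(a^\dagger a)\phi_n=f(n)\phi_n$. Deficiency indices: $n_\pm=\dim\operatorname{Ran}(A\pm i)^\perp$. A function $g:\mathbb{N}\to\mathbb{C}$ admits the asymptotic expansion $g(n)\sim\sum_{s\ge0}\lambda_sn^{-s/2}$ if for every $S\in\mathbb{N}$ there are $C,N$ with $|g(n)-\sum_{s=0}^S\lambda_sn^{-s/2}|\le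 Cn^{-(S+1)/2}$ for all $n\ge N$. *)

theory Defs
  imports "HOL-Analysis.Analysis" "HOL-Library.Function_Algebras"
begin

text \<open>The Hilbert space H is realized as l^2(N): the coordinate sequence of a vector
  with respect to the orthonormal basis phi_n.  phi_n is the n-th unit sequence.\<close>

definition l2 :: "(nat \<Rightarrow> complex) set" where
  "l2 = {x. summable (\<lambda>n. (cmod (x n))\<^sup>2)}"

text \<open>D_0: finite linear combinations of the phi_n = finitely supported sequences.\<close>
definition D0 :: "(nat \<Rightarrow> complex) set" where
  "D0 = {x. finite {n. x n \<noteq> 0}}"

definition l2_inner :: "(nat \<Rightarrow> complex) \<Rightarrow> (nat \<Rightarrow> complex) \<Rightarrow> complex" where
  "l2_inner u v = (\<Sum>n. u n * cnj (v n))"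

text \<open>Complex scalar multiplication on sequences, for the complex-linear dimension.\<close>
definition cscale :: "complex \<Rightarrow> (nat \<Rightarrow> complex) \<Rightarrow> (nat \<Rightarrow> complex)" where
  "cscale c x = (\<lambda>n. c * x n)"

text \<open>Annihilation: a phi_n = sqrt n phi_(n-1); in coordinates (a x)_m = sqrt(m+1) x_(m+1).\<close>
definition ann :: "(nat \<Rightarrow> complex) \<Rightarrow> (nat \<Rightarrow> complex)" where
  "ann x = (\<lambda>m. complex_of_real (sqrt (real (Suc m))) * x (Suc m))"

text \<open>Creation: a^dagger phi_n = sqrt(n+1) phi_(n+1); (a^dagger x)_m = sqrt m x_(m-1), (.)_0 = 0.\<close>
definition cre :: "(nat \<Rightarrow> complex) \<Rightarrow> (nat \<Rightarrow> complex)" where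
  "cre x = (\<lambda>m. if m = 0 then 0 else complex_of_real (sqrt (real m)) * x (m - 1))"

text \<open>f(a^dagger a) phi_n = f(n) phi_n.\<close>
definition numop :: "(nat \<Rightarrow> real) \<Rightarrow> (nat \<Rightarrow> complex) \<Rightarrow> (nat \<Rightarrow> complex)" where
  "numop f x = (\<lambda>n. complex_of_real (f n) * x n)"

definition opA :: "nat \<Rightarrow> nat \<Rightarrow> real \<Rightarrow> (nat \<Rightarrow> real) \<Rightarrow> (nat \<Rightarrow> complex) \<Rightarrow> (nat \<Rightarrow> complex)" where
  "opA k l \<theta> f x = (\<lambda>n.
      cis \<theta> * (cre ^^ k) ((ann ^^ l) x) n
    + cnj (cis \<theta>) * (cre ^^ l) ((ann ^^ k) x) n
    + numop f x n)"

definition range_perp :: "((nat \<Rightarrow> complex) \<Rightarrow> (nat \<Rightarrow> complex)) \<Rightarrow> complex \<Rightarrow> (nat \<Rightarrow> complex) set" where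
  "range_perp T c = {y \<in> l2. \<forall>x \<in> D0. l2_inner (\<lambda>n. T x n + c * x n) y = 0}"

text \<open>Deficiency indices n_+ = dim Ran(T + i)^\<bottom>, n_- = dim Ran(T - i)^\<bottom>
  (complex-linear dimension; the library's dim is 0 on infinite-dimensional sets).\<close>
definition def_plus :: "((nat \<Rightarrow> complex) \<Rightarrow> (nat \<Rightarrow> complex)) \<Rightarrow> nat" where
  "def_plus T = vector_space.dim cscale (range_perp T \<i>)"

definition def_minus :: "((nat \<Rightarrow> complex) \<Rightarrow> (nat \<Rightarrow> complex)) \<Rightarrow> nat" where
  "def_minus T = vector_space.dim cscale (range_perp T (- \<i>))"

definition has_asymp_expansion :: "(nat \<Rightarrow> real) \<Rightarrow> (nat \<Rightarrow> real) \<Rightarrow> bool" where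
  "has_asymp_expansion g lam \<longleftrightarrow>
     (\<forall>S::nat. \<exists>C N. \<forall>n\<ge>N.
        \<bar>g n - (\<Sum>s\<le>S. lam s * real n powr (- real s / 2))\<bar> \<le> C * real n powr (- (real S + 1) / 2))"

end

theory Submission
  imports Defs
begin

text \<open>In the basis \<open>\<phi>\<^sub>n\<close> the operator \<open>A\<close> is a Hermitian band matrix whose off-diagonal entries
  connect indices differing by \<open>d = k - l\<close>, so \<open>y \<in> Ran(A \<plusminus> i)\<^sup>\<bottom>\<close> means that \<open>y\<close> is square
  summable and solves a three-term recurrence along every residue class modulo \<open>d\<close>.  For
  \<open>Im c \<noteq> 0\<close> the solutions form a \<open>d\<close>-dimensional space, parametrised by \<open>y\<^sub>l, \<dots>, y\<^sub>k\<^sub>-\<^sub>1\<close>, so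
  \<open>n\<^sub>\<plusminus> = d\<close> as soon as every solution is square summable.

  The matrix entries grow like \<open>n\<^bsup>(k+l)/2\<^esup>\<close>.  Dividing the recurrence by their fourth roots
  turns it into \<open>x\<^sub>j\<^sub>+\<^sub>2 + \<rho>\<^sub>j x\<^sub>j + t\<^sub>j x\<^sub>j\<^sub>+\<^sub>1 = 0\<close>, where \<open>1 - \<rho>\<^sub>j\<close> and \<open>Im t\<^sub>j\<close> are summable
  and \<open>Re t\<^sub>j\<close> has bounded variation with limit \<open>\<kappa> < 2\<close>.  A discrete energy estimate shows
  that \<open>x\<close> is bounded, hence \<open>|y\<^sub>n|\<^sup>2 = O(n\<^bsup>-(k+l)/2\<^esup>)\<close>, which is summable because
  \<open>k + l \<ge> 3\<close>.\<close>

section \<open>The matrix of \<open>A\<close>\<close>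

definition hop_weight :: "nat \<Rightarrow> nat \<Rightarrow> real \<Rightarrow> real" where
  "hop_weight k l x = pochhammer (x + 1) k * pochhammer (x + 1) l"

lemma hop_weight_pos: "0 \<le> x \<Longrightarrow> 0 < hop_weight k l x"
  unfolding hop_weight_def by (simp add: pochhammer_pos)

lemma ann_funpow_apply:
  "(ann ^^ l) x n = of_real (sqrt (pochhammer (real n + 1) l)) * x (n + l)"
proof (induction l arbitrary: n)
  case (Suc l)
  have "pochhammer (real n + 1) (Suc l) = real (Suc n) * pochhammer (real (Suc n) + 1) l"
    by (simp add: pochhammer_rec add_ac)
  moreover have "ann ((ann ^^ l) x) n = of_real (sqrt (real (Suc n))) * (ann ^^ l) x (Suc n)"
    by (simp add: ann_def[of "(ann ^^ l) x"])
  ultimately show ?case by (simp add: Suc real_sqrt_mult add_ac)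
qed simp

lemma cre_funpow_apply:
  "(cre ^^ k) x n =
     (if k \<le> n then of_real (sqrt (pochhammer (real (n - k) + 1) k)) * x (n - k) else 0)"
proof (induction k arbitrary: n)
  case (Suc k)
  have step: "cre ((cre ^^ k) x) n =
      (if n = 0 then 0 else of_real (sqrt (real n)) * (cre ^^ k) x (n - 1))"
    by (simp add: cre_def[of "(cre ^^ k) x"])
  show ?case
  proof (cases "Suc k \<le> n")
    case True
    have "pochhammer (real (n - Suc k) + 1) (Suc k) = pochhammer (real (n - 1 - k) + 1) k * real n"
      using True by (simp add: pochhammer_Suc of_nat_diff)
    then show ?thesis
      using True by (simp add: step Suc real_sqrt_mult mult.commute)
  qed (auto simp: step Suc)
qed simp

text \<open>\<open>sqrt (hop_weight k l n)\<close> is the matrix entry of \<open>(a\<^sup>\<dagger>)\<^sup>k a\<^sup>l\<close> from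
  \<open>\<phi>\<^bsub>n+l\<^esub>\<close> to \<open>\<phi>\<^bsub>n+k\<^esub>\<close>.  Since the matrix of \<open>A\<close> is Hermitian, the same
  formula also computes its formal adjoint.\<close>

lemma opA_apply:
  assumes "l < k"
  shows "opA k l \<theta> f x n =
      (if k \<le> n then cis \<theta> * sqrt (hop_weight k l (real (n - k))) * x (n - (k - l)) else 0)
    + (if l \<le> n then cnj (cis \<theta>) * sqrt (hop_weight k l (real (n - l))) * x (n + (k - l)) else 0)
    + f n * x n"
proof -
  have "n - k + l = n - (k - l)" if "k \<le> n" using that assms by simp
  moreover have "n - l + k = n + (k - l)" if "l \<le> n" using that assms by simp
  ultimately show ?thesis
    by (auto simp: opA_def cre_funpow_apply ann_funpow_apply numop_def hop_weight_def
        real_sqrt_mult algebra_simps)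
qed

lemma opA_sum:
  assumes "l < k"
  shows "opA k l \<theta> f (\<lambda>n. \<Sum>m\<in>S. a m * u m n) n = (\<Sum>m\<in>S. a m * opA k l \<theta> f (u m) n)"
  unfolding opA_apply[OF assms] by (auto simp: sum_distrib_left sum.distrib algebra_simps)

lemma opA_diff:
  assumes "l < k"
  shows "opA k l \<theta> f (\<lambda>n. v n - w n) n = opA k l \<theta> f v n - opA k l \<theta> f w n"
  unfolding opA_apply[OF assms] by (simp add: algebra_simps)

definition unit_vec :: "nat \<Rightarrow> nat \<Rightarrow> complex" where
  "unit_vec m = (\<lambda>n. if n = m then 1 else 0)"

lemma unit_vec_in_D0: "unit_vec m \<in> D0"
  unfolding D0_def unit_vec_def by simp

lemma D0_eq_sum_unit_vec:
  assumes "x \<in> D0"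
  shows "x = (\<lambda>n. \<Sum>m\<in>{m. x m \<noteq> 0}. x m * unit_vec m n)"
proof
  fix n
  have "finite {m. x m \<noteq> 0}" using assms unfolding D0_def by simp
  then show "x n = (\<Sum>m\<in>{m. x m \<noteq> 0}. x m * unit_vec m n)"
    by (cases "x n = 0") (auto simp: unit_vec_def if_distrib cong: if_cong)
qed

lemma opA_unit_vec_inner_sums:
  assumes "l < k"
  shows "(\<lambda>n. (opA k l \<theta> f (unit_vec m) n + c * unit_vec m n) * cnj (y n))
           sums cnj (opA k l \<theta> f y m + cnj c * y m)"
proof -
  define d where "d = k - l"
  define up where "up = (if l \<le> m then cis \<theta> * sqrt (hop_weight k l (real (m - l))) else 0)"
  define down where "down = (if k \<le> m then cnj (cis \<theta>) * sqrt (hop_weight k l (real (m - k))) else 0)"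
  have "opA k l \<theta> f (unit_vec m) n + c * unit_vec m n =
      (if n = m + d then up else 0) + (if n = m - d then down else 0)
      + (if n = m then f m + c else 0)" for n
  proof -
    have "(if k \<le> n then cis \<theta> * sqrt (hop_weight k l (real (n - k))) * unit_vec m (n - d) else 0)
        = (if n = m + d then up else 0)"
      using assms by (auto simp: unit_vec_def up_def d_def)
    moreover have "(if l \<le> n then cnj (cis \<theta>) * sqrt (hop_weight k l (real (n - l))) * unit_vec m (n + d) else 0)
        = (if n = m - d then down else 0)"
      using assms by (auto simp: unit_vec_def down_def d_def)
    moreover have "f n * unit_vec m n + c * unit_vec m n = (if n = m then f m + c else 0)"
      by (simp add: unit_vec_def)
    ultimately show ?thesis
      unfolding opA_apply[OF assms] d_def by (simp add: add.assoc)
  qed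
  then have "(\<lambda>n. (opA k l \<theta> f (unit_vec m) n + c * unit_vec m n) * cnj (y n)) =
      (\<lambda>n. (if n = m + d then up * cnj (y (m + d)) else 0) + (if n = m - d then down * cnj (y (m - d)) else 0)
        + (if n = m then (f m + c) * cnj (y m) else 0))"
    by (auto simp: fun_eq_iff distrib_right)
  moreover have "(\<lambda>n. (if n = m + d then up * cnj (y (m + d)) else 0) + (if n = m - d then down * cnj (y (m - d)) else 0)
        + (if n = m then (f m + c) * cnj (y m) else 0))
      sums (up * cnj (y (m + d)) + down * cnj (y (m - d)) + (f m + c) * cnj (y m))"
    by (intro sums_add sums_single)
  moreover have "up * cnj (y (m + d)) + down * cnj (y (m - d)) + (f m + c) * cnj (y m)
      = cnj (opA k l \<theta> f y m + cnj c * y m)"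
    unfolding opA_apply[OF assms] up_def down_def d_def by (simp add: algebra_simps)
  ultimately show ?thesis by simp
qed

lemma range_perp_opA_iff:
  assumes "l < k"
  shows "y \<in> range_perp (opA k l \<theta> f) c \<longleftrightarrow>
    y \<in> l2 \<and> (\<forall>m. opA k l \<theta> f y m + cnj c * y m = 0)"
proof -
  have inner_unit: "l2_inner (\<lambda>n. opA k l \<theta> f (unit_vec m) n + c * unit_vec m n) y
      = cnj (opA k l \<theta> f y m + cnj c * y m)" for m
    unfolding l2_inner_def by (rule sums_unique[symmetric, OF opA_unit_vec_inner_sums[OF assms]])
  have inner_D0: "l2_inner (\<lambda>n. opA k l \<theta> f x n + c * x n) y
      = (\<Sum>m\<in>{m. x m \<noteq> 0}. x m * cnj (opA k l \<theta> f y m + cnj c * y m))" if "x \<in> D0" for x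
  proof -
    define S where "S = {m. x m \<noteq> 0}"
    have x: "x = (\<lambda>n. \<Sum>m\<in>S. x m * unit_vec m n)"
      unfolding S_def by (rule D0_eq_sum_unit_vec[OF that])
    have "(\<lambda>n. (opA k l \<theta> f x n + c * x n) * cnj (y n)) =
        (\<lambda>n. \<Sum>m\<in>S. x m * ((opA k l \<theta> f (unit_vec m) n + c * unit_vec m n) * cnj (y n)))"
    proof
      fix n
      have "opA k l \<theta> f x n = (\<Sum>m\<in>S. x m * opA k l \<theta> f (unit_vec m) n)"
        by (subst x) (rule opA_sum[OF assms])
      moreover have "x n = (\<Sum>m\<in>S. x m * unit_vec m n)"
        by (subst x) simp
      ultimately show "(opA k l \<theta> f x n + c * x n) * cnj (y n) =
          (\<Sum>m\<in>S. x m * ((opA k l \<theta> f (unit_vec m) n + c * unit_vec m n) * cnj (y n)))"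
        by (simp add: sum_distrib_left sum_distrib_right sum.distrib algebra_simps)
    qed
    then have "l2_inner (\<lambda>n. opA k l \<theta> f x n + c * x n) y
        = (\<Sum>m\<in>S. \<Sum>n. x m * ((opA k l \<theta> f (unit_vec m) n + c * unit_vec m n) * cnj (y n)))"
      unfolding l2_inner_def
      by (simp add: suminf_sum summable_mult sums_summable[OF opA_unit_vec_inner_sums[OF assms]])
    also have "\<dots> = (\<Sum>m\<in>S. x m * cnj (opA k l \<theta> f y m + cnj c * y m))"
      by (intro sum.cong refl sums_unique[symmetric] sums_mult opA_unit_vec_inner_sums[OF assms])
    finally show ?thesis unfolding S_def .
  qed
  show ?thesis
  proof
    assume y: "y \<in> range_perp (opA k l \<theta> f) c"
    have "cnj (opA k l \<theta> f y m + cnj c * y m) = 0" for m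
      using y unit_vec_in_D0[of m] unfolding range_perp_def inner_unit[symmetric] by blast
    then have "opA k l \<theta> f y m + cnj c * y m = 0" for m
      by (simp only: complex_cnj_zero_iff)
    then show "y \<in> l2 \<and> (\<forall>m. opA k l \<theta> f y m + cnj c * y m = 0)"
      using y unfolding range_perp_def by simp
  next
    assume "y \<in> l2 \<and> (\<forall>m. opA k l \<theta> f y m + cnj c * y m = 0)"
    then show "y \<in> range_perp (opA k l \<theta> f) c"
      unfolding range_perp_def using inner_D0 by simp
  qed
qed

section \<open>Solutions of the deficiency equation\<close>

text \<open>The solution with \<open>y (l + i) = (if i = r then 1 else 0)\<close> for \<open>i < k - l\<close>: for \<open>n \<ge> k\<close>
  the deficiency equation at index \<open>n - (k - l)\<close> is solved for \<open>y n\<close>, whose coefficient is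
  nonzero.  The guard \<open>k \<le> l\<close> only serves termination.\<close>

function basic_solution ::
    "nat \<Rightarrow> nat \<Rightarrow> real \<Rightarrow> (nat \<Rightarrow> real) \<Rightarrow> complex \<Rightarrow> nat \<Rightarrow> nat \<Rightarrow> complex" where
  "basic_solution k l \<theta> f c r n =
    (if n < l \<or> k \<le> l then 0
     else if n < k then (if n = l + r then 1 else 0)
     else - ((if 2 * k - l \<le> n
              then cis \<theta> * sqrt (hop_weight k l (real (n - (2 * k - l))))
                     * basic_solution k l \<theta> f c r (n - 2 * (k - l))
              else 0)
            + (f (n - (k - l)) + cnj c) * basic_solution k l \<theta> f c r (n - (k - l)))
          / (cnj (cis \<theta>) * sqrt (hop_weight k l (real (n - k)))))"
  by pat_completeness auto
termination
  by (relation "Wellfounded.measure (\<lambda>(k, l, \<theta>, f, c, r, n). n)") auto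

declare basic_solution.simps [simp del]

lemma basic_solution_solves:
  assumes "l < k"
  shows "opA k l \<theta> f (basic_solution k l \<theta> f c r) m + cnj c * basic_solution k l \<theta> f c r m = 0"
proof (cases "l \<le> m")
  case False
  then show ?thesis
    using assms by (simp add: opA_apply basic_solution.simps[of k l \<theta> f c r m])
next
  case True
  define d where "d = k - l"
  define y where "y = basic_solution k l \<theta> f c r"
  define lead where "lead = cnj (cis \<theta>) * sqrt (hop_weight k l (real (m - l)))"
  define rest where "rest = (if k \<le> m then cis \<theta> * sqrt (hop_weight k l (real (m - k))) * y (m - d) else 0)
      + (f m + cnj c) * y m"
  have "lead \<noteq> 0"
    unfolding lead_def using hop_weight_pos[of "real (m - l)" k l] by simp
  moreover have "y (m + d) = - rest / lead"
  proof -
    have idx: "\<not> (m + d < l \<or> k \<le> l)" "\<not> m + d < k" "m + d - (k - l) = m"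
      "(2 * k - l \<le> m + d) = (k \<le> m)" "m + d - (2 * k - l) = m - k"
      "m + d - 2 * (k - l) = m - d" "m + d - k = m - l"
      using True assms by (auto simp: d_def)
    show ?thesis
      unfolding y_def rest_def lead_def by (subst basic_solution.simps) (simp only: idx if_False)
  qed
  ultimately have "lead * y (m + d) + rest = 0" by simp
  moreover have "opA k l \<theta> f y m + cnj c * y m = lead * y (m + d) + rest"
    using True unfolding opA_apply[OF assms] lead_def rest_def d_def by (simp add: algebra_simps)
  ultimately show ?thesis unfolding y_def by simp
qed

lemma basic_solution_initial:
  assumes "l < k" "i < k - l"
  shows "basic_solution k l \<theta> f c r (l + i) = (if i = r then 1 else 0)"
  using assms by (subst basic_solution.simps) auto

text \<open>For \<open>Im c \<noteq> 0\<close> the diagonal coefficient \<open>f n + cnj c\<close> never vanishes, which forces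
  \<open>y n = 0\<close> for \<open>n < l\<close>; above \<open>k\<close> the recurrence determines \<open>y\<close>.\<close>

lemma solution_eq_0_if_initial_eq_0:
  assumes "l < k" "Im c \<noteq> 0"
    and sol: "\<forall>m. opA k l \<theta> f y m + cnj c * y m = 0"
    and init: "\<forall>n. l \<le> n \<and> n < k \<longrightarrow> y n = 0"
  shows "y n = 0"
proof (induction n rule: less_induct)
  case (less n)
  consider "n < l" | "l \<le> n" "n < k" | "k \<le> n" by linarith
  then show ?case
  proof cases
    case 1
    have "f n + cnj c \<noteq> 0"
      using assms(2) by (auto simp: complex_eq_iff)
    moreover have "(f n + cnj c) * y n = 0"
      using sol[rule_format, of n] 1 assms(1) by (simp add: opA_apply algebra_simps)
    ultimately show ?thesis by simp
  next
    case 2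
    then show ?thesis using init by simp
  next
    case 3
    define m where "m = n - (k - l)"
    have m: "l \<le> m" "m + (k - l) = n" "m < n" "m - (k - l) < n"
      using 3 assms(1) by (auto simp: m_def)
    have "opA k l \<theta> f y m + cnj c * y m = cnj (cis \<theta>) * sqrt (hop_weight k l (real (m - l))) * y n"
      using m less[of m] less[of "m - (k - l)"] unfolding opA_apply[OF assms(1)] by simp
    then show ?thesis
      using sol hop_weight_pos[of "real (m - l)" k l] by simp
  qed
qed

interpretation cs: vector_space cscale
  by unfold_locales (auto simp: cscale_def fun_eq_iff algebra_simps)

lemma sum_apply: "(\<Sum>x\<in>A. F x) n = (\<Sum>x\<in>A. F x n)"
  by (induction A rule: infinite_finite_induct) auto

lemma solution_eq_sum_basic_solution:
  assumes "l < k" "Im c \<noteq> 0"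
    and sol: "\<forall>m. opA k l \<theta> f y m + cnj c * y m = 0"
  shows "y = (\<Sum>r<k - l. cscale (y (l + r)) (basic_solution k l \<theta> f c r))"
proof -
  define w where "w = (\<Sum>r<k - l. cscale (y (l + r)) (basic_solution k l \<theta> f c r))"
  have w: "w n = (\<Sum>r<k - l. y (l + r) * basic_solution k l \<theta> f c r n)" for n
    unfolding w_def sum_apply by (simp add: cscale_def)
  have "y n - w n = 0" for n
  proof (rule solution_eq_0_if_initial_eq_0[OF assms(1,2), where y = "\<lambda>n. y n - w n"])
    have "opA k l \<theta> f (basic_solution k l \<theta> f c r) m = - (cnj c * basic_solution k l \<theta> f c r m)"
      for r m using basic_solution_solves[OF assms(1)] by (simp add: eq_neg_iff_add_eq_0)
    moreover have "opA k l \<theta> f y m = - (cnj c * y m)" for m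
      using sol by (simp add: eq_neg_iff_add_eq_0)
    ultimately show "\<forall>m. opA k l \<theta> f (\<lambda>n. y n - w n) m + cnj c * (y m - w m) = 0"
      by (simp add: w opA_diff[OF assms(1)] opA_sum[OF assms(1)] sum_distrib_left
          sum_negf algebra_simps)
    show "\<forall>n. l \<le> n \<and> n < k \<longrightarrow> y n - w n = 0"
    proof (intro allI impI)
      fix n assume n: "l \<le> n \<and> n < k"
      have "w n = (\<Sum>r<k - l. if r = n - l then y (l + r) else 0)"
        unfolding w using n basic_solution_initial[OF assms(1), of "n - l"]
        by (intro sum.cong) auto
      moreover have "n - l < k - l" "l + (n - l) = n" using n by auto
      ultimately show "y n - w n = 0" by simp
    qed
  qed
  then show ?thesis unfolding w_def[symmetric] by (simp add: fun_eq_iff)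
qed

lemma dim_range_perp_opA:
  assumes "l < k" "Im c \<noteq> 0"
    and square_summable: "\<And>y. \<forall>m. opA k l \<theta> f y m + cnj c * y m = 0 \<Longrightarrow> y \<in> l2"
  shows "cs.dim (range_perp (opA k l \<theta> f) c) = k - l"
proof -
  define d where "d = k - l"
  define b where "b = basic_solution k l \<theta> f c"
  define B where "B = b ` {..<d}"
  have b_initial: "b r (l + i) = (if i = r then 1 else 0)" if "i < d" for r i
    unfolding b_def d_def using basic_solution_initial[OF assms(1)] that by (simp add: d_def)
  have inj: "inj_on b {..<d}"
    by (rule inj_onI) (metis b_initial lessThan_iff zero_neq_one)
  have "b r \<in> range_perp (opA k l \<theta> f) c" for r
    unfolding b_def range_perp_opA_iff[OF assms(1)]
    using basic_solution_solves[OF assms(1)] square_summable by blast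
  then have "B \<subseteq> range_perp (opA k l \<theta> f) c"
    unfolding B_def by blast
  moreover have "range_perp (opA k l \<theta> f) c \<subseteq> cs.span B"
  proof
    fix y assume "y \<in> range_perp (opA k l \<theta> f) c"
    then have "y = (\<Sum>r<d. cscale (y (l + r)) (b r))"
      unfolding range_perp_opA_iff[OF assms(1)] b_def d_def
      using solution_eq_sum_basic_solution[OF assms(1,2)] by blast
    also have "\<dots> \<in> cs.span B"
      unfolding B_def by (intro cs.span_sum cs.span_scale cs.span_base) auto
    finally show "y \<in> cs.span B" .
  qed
  moreover have "cs.independent B"
  proof (rule cs.independent_if_scalars_zero)
    show "finite B" unfolding B_def by simp
  next
    fix g x assume sum0: "(\<Sum>x\<in>B. cscale (g x) x) = 0" and "x \<in> B"
    then obtain r where r: "r < d" "x = b r" unfolding B_def by auto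
    have "0 = (\<Sum>x\<in>B. cscale (g x) x) (l + r)" using sum0 by simp
    also have "\<dots> = (\<Sum>i<d. g (b i) * b i (l + r))"
      unfolding sum_apply B_def using inj by (simp add: sum.reindex cscale_def)
    also have "\<dots> = (\<Sum>i<d. if i = r then g (b i) else 0)"
      using r b_initial by (intro sum.cong) auto
    also have "\<dots> = g x"
      using r by simp
    finally show "g x = 0" by simp
  qed
  moreover have "card B = d"
    unfolding B_def using inj by (simp add: card_image)
  ultimately show ?thesis
    unfolding d_def by (rule cs.dim_unique)
qed

lemma opA_solution_progression:
  assumes "l < k" and sol: "\<forall>m. opA k l \<theta> f y m + cnj c * y m = 0"
  defines "d \<equiv> k - l"
  shows "cnj (cis \<theta>) * sqrt (hop_weight k l (real (r + Suc j * d))) * y (l + r + Suc (Suc j) * d)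
       + cis \<theta> * sqrt (hop_weight k l (real (r + j * d))) * y (l + r + j * d)
       + (f (l + r + Suc j * d) + cnj c) * y (l + r + Suc j * d) = 0"
proof -
  define m where "m = l + r + Suc j * d"
  have idx: "k \<le> m" "l \<le> m" "m - k = r + j * d" "m - l = r + Suc j * d"
    "m - (k - l) = l + r + j * d" "m + (k - l) = l + r + Suc (Suc j) * d"
    using assms(1) unfolding m_def d_def by auto
  have "opA k l \<theta> f y m + cnj c * y m = 0" using sol by blast
  then show ?thesis
    unfolding m_def[symmetric] by (simp add: opA_apply[OF assms(1)] idx algebra_simps)
qed

section \<open>Sequences of bounded variation\<close>

definition bounded_variation :: "(nat \<Rightarrow> real) \<Rightarrow> bool" where
  "bounded_variation a \<longleftrightarrow> summable (\<lambda>j. \<bar>a (Suc j) - a j\<bar>)"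

lemma bounded_variation_bounded:
  assumes "bounded_variation a"
  obtains M where "\<And>j. \<bar>a j\<bar> \<le> M"
proof
  have s: "summable (\<lambda>j. \<bar>a (Suc j) - a j\<bar>)" using assms by (simp add: bounded_variation_def)
  fix n
  have "\<bar>a n - a 0\<bar> = \<bar>\<Sum>j<n. a (Suc j) - a j\<bar>" by (simp add: sum_lessThan_telescope)
  also have "\<dots> \<le> (\<Sum>j<n. \<bar>a (Suc j) - a j\<bar>)" by (rule sum_abs)
  also have "\<dots> \<le> (\<Sum>j. \<bar>a (Suc j) - a j\<bar>)" by (rule sum_le_suminf[OF s]) auto
  finally show "\<bar>a n\<bar> \<le> \<bar>a 0\<bar> + (\<Sum>j. \<bar>a (Suc j) - a j\<bar>)" by linarith
qed

lemma bounded_variation_const: "bounded_variation (\<lambda>j. c)"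
  by (simp add: bounded_variation_def)

lemma bounded_variation_add:
  assumes "bounded_variation a" "bounded_variation b"
  shows "bounded_variation (\<lambda>j. a j + b j)"
  unfolding bounded_variation_def
proof (rule summable_comparison_test'[where N = 0])
  show "summable (\<lambda>j. \<bar>a (Suc j) - a j\<bar> + \<bar>b (Suc j) - b j\<bar>)"
    using assms unfolding bounded_variation_def by (rule summable_add)
qed simp

lemma bounded_variation_if_summable_abs:
  assumes "summable (\<lambda>j. \<bar>a j\<bar>)"
  shows "bounded_variation a"
  unfolding bounded_variation_def
proof (rule summable_comparison_test'[where N = 0])
  show "summable (\<lambda>j. \<bar>a (Suc j)\<bar> + \<bar>a j\<bar>)"
    using assms by (intro summable_add) (simp_all add: summable_Suc_iff[where f = "\<lambda>j. \<bar>a j\<bar>"])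
qed (simp add: abs_triangle_ineq4)

lemma bounded_variation_mult:
  assumes "bounded_variation a" "bounded_variation b"
  shows "bounded_variation (\<lambda>j. a j * b j)"
proof -
  obtain Ma where Ma: "\<And>j. \<bar>a j\<bar> \<le> Ma" using bounded_variation_bounded[OF assms(1)] by blast
  obtain Mb where Mb: "\<And>j. \<bar>b j\<bar> \<le> Mb" using bounded_variation_bounded[OF assms(2)] by blast
  have "summable (\<lambda>j. Ma * \<bar>b (Suc j) - b j\<bar> + Mb * \<bar>a (Suc j) - a j\<bar>)"
    using assms unfolding bounded_variation_def by (intro summable_add summable_mult)
  then show ?thesis
    unfolding bounded_variation_def
  proof (rule summable_comparison_test'[where N = 0])
    fix j
    have "a (Suc j) * b (Suc j) - a j * b j = a (Suc j) * (b (Suc j) - b j) + b j * (a (Suc j) - a j)"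
      by (simp add: algebra_simps)
    then have "\<bar>a (Suc j) * b (Suc j) - a j * b j\<bar>
        \<le> \<bar>a (Suc j)\<bar> * \<bar>b (Suc j) - b j\<bar> + \<bar>b j\<bar> * \<bar>a (Suc j) - a j\<bar>"
      by (metis abs_mult abs_triangle_ineq)
    also have "\<dots> \<le> Ma * \<bar>b (Suc j) - b j\<bar> + Mb * \<bar>a (Suc j) - a j\<bar>"
      using Ma Mb by (intro add_mono mult_right_mono) auto
    finally show "norm \<bar>a (Suc j) * b (Suc j) - a j * b j\<bar>
        \<le> Ma * \<bar>b (Suc j) - b j\<bar> + Mb * \<bar>a (Suc j) - a j\<bar>"
      by simp
  qed
qed

lemma bounded_variation_prod:
  "(\<And>i. i \<in> A \<Longrightarrow> bounded_variation (a i)) \<Longrightarrow> bounded_variation (\<lambda>j. \<Prod>i\<in>A. a i j)"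
proof (induction A rule: infinite_finite_induct)
  case (insert x F)
  then show ?case by (simp add: bounded_variation_mult)
qed (auto simp: bounded_variation_const)

lemma bounded_variation_mono_bounded:
  assumes "\<And>j. a j \<le> a (Suc j)" "\<And>j. a j \<le> M"
  shows "bounded_variation a"
  unfolding bounded_variation_def
proof (rule summableI_nonneg_bounded)
  fix n
  have "(\<Sum>j<n. \<bar>a (Suc j) - a j\<bar>) = (\<Sum>j<n. a (Suc j) - a j)"
    using assms(1) by (intro sum.cong) auto
  also have "\<dots> = a n - a 0" by (rule sum_lessThan_telescope)
  also have "\<dots> \<le> M - a 0" using assms(2) by simp
  finally show "(\<Sum>j<n. \<bar>a (Suc j) - a j\<bar>) \<le> M - a 0" .
qed simp

lemma bounded_variation_antimono_bounded:
  assumes "\<And>j. a (Suc j) \<le> a j" "\<And>j. M \<le> a j"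
  shows "bounded_variation a"
proof -
  have "bounded_variation (\<lambda>j. - a j)"
    by (rule bounded_variation_mono_bounded[of _ "- M"]) (use assms in auto)
  then show ?thesis by (simp add: bounded_variation_def abs_minus_commute)
qed

lemma summable_real_Suc_powr: "1 < p \<Longrightarrow> summable (\<lambda>j. (real j + 1) powr (- p))"
  using summable_iff_shift[of "\<lambda>j. real j powr (- p)" 1]
  by (simp add: summable_real_powr_iff add.commute)

lemma ratio_shift_mono:
  fixes x y \<alpha> \<beta> :: real
  assumes "0 < x + \<beta>" "x \<le> y"
  shows "\<alpha> \<le> \<beta> \<Longrightarrow> (x + \<alpha>) / (x + \<beta>) \<le> (y + \<alpha>) / (y + \<beta>)"
    and "\<beta> \<le> \<alpha> \<Longrightarrow> (y + \<alpha>) / (y + \<beta>) \<le> (x + \<alpha>) / (x + \<beta>)"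
proof -
  have y: "0 < y + \<beta>" using assms by linarith
  have key: "(x + \<alpha>) * (y + \<beta>) - (y + \<alpha>) * (x + \<beta>) = (\<alpha> - \<beta>) * (y - x)"
    by (simp add: algebra_simps)
  show "(x + \<alpha>) / (x + \<beta>) \<le> (y + \<alpha>) / (y + \<beta>)" if "\<alpha> \<le> \<beta>"
  proof -
    have "(\<alpha> - \<beta>) * (y - x) \<le> 0" using that assms(2) by (simp add: mult_nonpos_nonneg)
    then show ?thesis using assms(1) y key by (simp add: divide_simps)
  qed
  show "(y + \<alpha>) / (y + \<beta>) \<le> (x + \<alpha>) / (x + \<beta>)" if "\<beta> \<le> \<alpha>"
  proof -
    have "0 \<le> (\<alpha> - \<beta>) * (y - x)" using that assms(2) by simp
    then show ?thesis using assms(1) y key by (simp add: divide_simps)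
  qed
qed

lemma bounded_variation_ratio_powr:
  fixes X :: "nat \<Rightarrow> real"
  assumes mono: "\<And>j. X j \<le> X (Suc j)" and pos: "\<And>j. 0 < X j + \<beta>" "0 \<le> X 0 + \<alpha>" and "0 \<le> e"
  shows "bounded_variation (\<lambda>j. ((X j + \<alpha>) / (X j + \<beta>)) powr e)"
proof (cases "\<alpha> \<le> \<beta>")
  case True
  have "X 0 \<le> X j" for j by (induction j) (use mono order_trans in auto)
  then have "0 \<le> X j + \<alpha>" for j using pos(2) by (meson add_right_mono order_trans)
  then have ratio: "0 \<le> (X j + \<alpha>) / (X j + \<beta>) \<and> (X j + \<alpha>) / (X j + \<beta>) \<le> 1" for j
    using pos(1)[of j] True by (simp add: divide_simps)
  show ?thesis
  proof (rule bounded_variation_mono_bounded)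
    show "((X j + \<alpha>) / (X j + \<beta>)) powr e \<le> ((X (Suc j) + \<alpha>) / (X (Suc j) + \<beta>)) powr e" for j
      using ratio ratio_shift_mono(1)[OF pos(1) mono True] \<open>0 \<le> e\<close> by (intro powr_mono2) auto
    show "((X j + \<alpha>) / (X j + \<beta>)) powr e \<le> 1" for j
      using ratio[of j] \<open>0 \<le> e\<close> by (metis abs_of_nonneg powr_le1)
  qed
next
  case False
  show ?thesis
  proof (rule bounded_variation_antimono_bounded[of _ 0])
    show "((X (Suc j) + \<alpha>) / (X (Suc j) + \<beta>)) powr e \<le> ((X j + \<alpha>) / (X j + \<beta>)) powr e" for j
      using pos(1)[of "Suc j"] False ratio_shift_mono(2)[OF pos(1) mono] \<open>0 \<le> e\<close>
      by (intro powr_mono2) auto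
  qed simp
qed

lemma filterlim_at_top_if_real_le:
  fixes X :: "nat \<Rightarrow> real"
  assumes "\<And>j. real j \<le> X j"
  shows "filterlim X at_top sequentially"
  by (rule filterlim_at_top_mono[OF filterlim_real_sequentially]) (use assms in \<open>auto intro: always_eventually\<close>)

lemma tendsto_ratio_shift:
  fixes X :: "nat \<Rightarrow> real"
  assumes "filterlim X at_top sequentially"
  shows "(\<lambda>j. (X j + \<alpha>) / (X j + \<beta>)) \<longlonglongrightarrow> 1"
proof -
  have X\<beta>: "filterlim (\<lambda>j. \<beta> + X j) at_top sequentially"
    by (rule filterlim_tendsto_add_at_top[OF tendsto_const assms])
  have "(\<lambda>j. 1 + (\<alpha> - \<beta>) * inverse (\<beta> + X j)) \<longlonglongrightarrow> 1 + (\<alpha> - \<beta>) * 0"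
    by (intro tendsto_intros tendsto_inverse_0_at_top X\<beta>)
  moreover have "eventually (\<lambda>j. 1 + (\<alpha> - \<beta>) * inverse (\<beta> + X j) = (X j + \<alpha>) / (X j + \<beta>)) sequentially"
    using X\<beta> unfolding filterlim_at_top_dense
    by (rule eventually_mono[OF spec[of _ 0]]) (simp add: field_simps)
  ultimately show ?thesis by (simp add: tendsto_cong)
qed

text \<open>Only the terms up to \<open>n\<^sup>-\<^sup>1\<close> of the expansion are used: the remainder \<open>O(n\<^sup>-\<^sup>3\<^sup>/\<^sup>2)\<close> is
  summable along any sequence \<open>M j \<ge> j + 1\<close>, and the terms in between are monotone.\<close>

lemma has_asymp_expansion_along:
  fixes G :: "nat \<Rightarrow> real" and M :: "nat \<Rightarrow> nat"
  assumes expansion: "has_asymp_expansion G lam"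
    and M: "\<And>j. real j + 1 \<le> real (M j)" "\<And>j. M j \<le> M (Suc j)"
  shows "bounded_variation (\<lambda>j. G (M j))" "(\<lambda>j. G (M j)) \<longlonglongrightarrow> lam 0"
proof -
  obtain C N0 where CN: "\<And>n. N0 \<le> n \<Longrightarrow>
      \<bar>G n - (\<Sum>s\<le>2. lam s * real n powr (- real s / 2))\<bar> \<le> C * real n powr (- (real 2 + 1) / 2)"
    using expansion unfolding has_asymp_expansion_def by blast
  have M_pos: "0 < real (M j)" for j using M(1)[of j] by linarith
  define a where "a j = real (M j) powr (- 1/2)" for j
  define b where "b j = real (M j) powr (- 1)" for j
  define R where "R j = G (M j) - (lam 0 + lam 1 * a j + lam 2 * b j)" for j
  have expand: "(\<Sum>s\<le>2. lam s * real (M j) powr (- real s / 2)) = lam 0 + lam 1 * a j + lam 2 * b j" for j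
    using M_pos[of j] by (simp add: numeral_2_eq_2 a_def b_def)
  have G_eq: "G (M j) = lam 0 + lam 1 * a j + lam 2 * b j + R j" for j
    unfolding R_def by simp
  have "real j \<le> real (M j)" for j using M(1)[of j] by linarith
  then have M_top: "filterlim (\<lambda>j. real (M j)) at_top sequentially"
    by (rule filterlim_at_top_if_real_le)
  have R_summable: "summable (\<lambda>j. \<bar>R j\<bar>)"
  proof (rule summable_comparison_test'[OF summable_mult[OF summable_real_Suc_powr[of "3/2"]]])
    fix j assume j: "N0 \<le> j"
    then have "\<bar>R j\<bar> \<le> C * real (M j) powr (- 3/2)"
      using CN[of "M j"] M(1)[of j] unfolding R_def expand[symmetric] by simp
    also have "\<dots> \<le> \<bar>C\<bar> * (real j + 1) powr (- (3/2))"
      using powr_mono2'[of "- (3/2)" "real j + 1" "real (M j)"] M(1)[of j]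
      by (intro mult_mono) auto
    finally show "norm \<bar>R j\<bar> \<le> \<bar>C\<bar> * (real j + 1) powr (- (3/2))" by simp
  qed simp
  have bv_a: "bounded_variation a"
    unfolding a_def by (rule bounded_variation_antimono_bounded[of _ 0])
      (use M M_pos in \<open>auto intro: powr_mono2'\<close>)
  have bv_b: "bounded_variation b"
    unfolding b_def
  proof (rule bounded_variation_antimono_bounded[of _ 0])
    show "real (M (Suc j)) powr - 1 \<le> real (M j) powr - 1" for j
      by (rule powr_mono2') (use M_pos[of j] M(2)[of j] in auto)
  qed simp
  show "bounded_variation (\<lambda>j. G (M j))"
    unfolding G_eq
    by (intro bounded_variation_add bounded_variation_mult bounded_variation_const bv_a bv_b
        bounded_variation_if_summable_abs[OF R_summable])
  have "a \<longlonglongrightarrow> 0" unfolding a_def by (rule tendsto_neg_powr[OF _ M_top]) simp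
  moreover have "b \<longlonglongrightarrow> 0" unfolding b_def by (rule tendsto_neg_powr[OF _ M_top]) simp
  moreover have "R \<longlonglongrightarrow> 0"
    using summable_LIMSEQ_zero[OF R_summable] by (simp add: tendsto_rabs_zero_iff)
  ultimately have "(\<lambda>j. lam 0 + lam 1 * a j + lam 2 * b j + R j) \<longlonglongrightarrow> lam 0 + lam 1 * 0 + lam 2 * 0 + 0"
    by (intro tendsto_intros)
  then show "(\<lambda>j. G (M j)) \<longlonglongrightarrow> lam 0" unfolding G_eq by simp
qed

lemma progression_ge:
  fixes X :: "nat \<Rightarrow> real"
  assumes "\<And>j. X (Suc j) = X j + d" "0 \<le> X 0" "1 \<le> d"
  shows "real j \<le> X j"
  by (induction j) (use assms in auto)

section \<open>An energy estimate for three-term recurrences\<close>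

lemma abs_Re_mult_cnj_le: "2 * \<bar>Re (a * cnj b)\<bar> \<le> (cmod a)\<^sup>2 + (cmod b)\<^sup>2"
proof -
  have "\<bar>Re (a * cnj b)\<bar> \<le> cmod a * cmod b"
    using abs_Re_le_cmod[of "a * cnj b"] by (simp add: norm_mult)
  moreover have "0 \<le> (cmod a - cmod b)\<^sup>2" by simp
  ultimately show ?thesis by (simp add: power2_diff)
qed

lemma energy_lower_bound:
  fixes p q :: complex
  assumes "\<bar>\<tau>\<bar> \<le> 2 - \<eta>"
  shows "\<eta> / 2 * ((cmod p)\<^sup>2 + (cmod q)\<^sup>2) \<le> (cmod p)\<^sup>2 + (cmod q)\<^sup>2 + \<tau> * Re (p * cnj q)"
proof -
  have "\<bar>\<tau> * Re (p * cnj q)\<bar> \<le> (2 - \<eta>) * (((cmod p)\<^sup>2 + (cmod q)\<^sup>2) / 2)"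
    unfolding abs_mult using assms abs_Re_mult_cnj_le[of p q] by (intro mult_mono) auto
  moreover have "\<eta> / 2 * g \<le> g + z" if "\<bar>z\<bar> \<le> (2 - \<eta>) * (g / 2)" for g z :: real
    using that by (simp add: abs_le_iff algebra_simps)
  ultimately show ?thesis by blast
qed

lemma energy_step:
  fixes q w t :: complex and \<rho> \<tau> :: real
  assumes "0 \<le> \<rho>" "\<rho> \<le> 1"
  defines "p \<equiv> - (t * q + of_real \<rho> * w)"
  shows "(cmod p)\<^sup>2 + (cmod q)\<^sup>2 + Re t * Re (p * cnj q)
    \<le> (cmod q)\<^sup>2 + (cmod w)\<^sup>2 + \<tau> * Re (q * cnj w)
      + ((Im t)\<^sup>2 + \<bar>Im t\<bar> + \<bar>\<rho> * Re t - \<tau>\<bar>) * ((cmod q)\<^sup>2 + (cmod w)\<^sup>2)"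
proof -
  define Q where "Q = (cmod q)\<^sup>2"
  define W where "W = (cmod w)\<^sup>2"
  define R where "R = Re (q * cnj w)"
  define I where "I = Re (q * cnj (\<i> * w))"
  have identity: "(cmod p)\<^sup>2 + (cmod q)\<^sup>2 + Re t * Re (p * cnj q)
      = Q + W + \<tau> * R + ((Im t)\<^sup>2 * Q + (\<rho>\<^sup>2 - 1) * W + (\<rho> * Re t - \<tau>) * R - 2 * \<rho> * Im t * I)"
    unfolding p_def Q_def W_def R_def I_def cmod_power2 by (simp add: power2_eq_square algebra_simps)
  have R: "2 * \<bar>R\<bar> \<le> Q + W"
    unfolding Q_def W_def R_def by (rule abs_Re_mult_cnj_le)
  have I: "2 * \<bar>I\<bar> \<le> Q + W"
    unfolding Q_def W_def I_def using abs_Re_mult_cnj_le[of q "\<i> * w"] by (simp add: norm_mult)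
  have "(\<rho>\<^sup>2 - 1) * W \<le> 0"
    using assms(1,2) by (simp add: W_def mult_nonpos_nonneg power_le_one)
  moreover have "(\<rho> * Re t - \<tau>) * R \<le> \<bar>\<rho> * Re t - \<tau>\<bar> * (Q + W)"
  proof -
    have "(\<rho> * Re t - \<tau>) * R \<le> \<bar>\<rho> * Re t - \<tau>\<bar> * \<bar>R\<bar>"
      by (metis abs_ge_self abs_mult)
    also have "\<dots> \<le> \<bar>\<rho> * Re t - \<tau>\<bar> * (Q + W)"
      using R by (intro mult_left_mono) auto
    finally show ?thesis .
  qed
  moreover have "- 2 * \<rho> * Im t * I \<le> \<bar>Im t\<bar> * (Q + W)"
  proof -
    have "- 2 * \<rho> * Im t * I \<le> \<rho> * \<bar>Im t\<bar> * (2 * \<bar>I\<bar>)"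
    proof -
      have "- (Im t * I) \<le> \<bar>Im t\<bar> * \<bar>I\<bar>" by (metis abs_ge_minus_self abs_mult)
      then have "\<rho> * - (Im t * I) \<le> \<rho> * (\<bar>Im t\<bar> * \<bar>I\<bar>)" using assms(1) by (rule mult_left_mono)
      then show ?thesis by (simp add: algebra_simps)
    qed
    also have "\<dots> \<le> 1 * \<bar>Im t\<bar> * (Q + W)"
      using assms(1,2) I by (intro mult_mono) auto
    finally show ?thesis by simp
  qed
  moreover have "(Im t)\<^sup>2 * Q \<le> (Im t)\<^sup>2 * (Q + W)"
    by (intro mult_left_mono) (simp_all add: W_def)
  ultimately have "Q + W + \<tau> * R + ((Im t)\<^sup>2 * Q + (\<rho>\<^sup>2 - 1) * W + (\<rho> * Re t - \<tau>) * R - 2 * \<rho> * Im t * I)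
      \<le> Q + W + \<tau> * R + ((Im t)\<^sup>2 + \<bar>Im t\<bar> + \<bar>\<rho> * Re t - \<tau>\<bar>) * (Q + W)"
    by (simp add: algebra_simps)
  then show ?thesis
    unfolding identity by (simp only: Q_def W_def R_def)
qed

lemma bounded_if_mult_increments_summable:
  fixes F e :: "nat \<Rightarrow> real"
  assumes F_nonneg: "\<And>j. N \<le> j \<Longrightarrow> 0 \<le> F j"
    and F_step: "\<And>j. N \<le> j \<Longrightarrow> F (Suc j) \<le> (1 + e j) * F j"
    and "\<And>j. 0 \<le> e j" "summable e"
  obtains B where "\<And>j. N \<le> j \<Longrightarrow> F j \<le> B"
proof
  have growth: "F (N + i) \<le> F N * exp (\<Sum>j<N + i. e j)" for i
  proof (induction i)
    case 0
    have "F N * 1 \<le> F N * exp (\<Sum>j<N. e j)"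
      using F_nonneg[of N] assms(3) by (intro mult_left_mono) (simp_all add: sum_nonneg)
    then show ?case by simp
  next
    case (Suc i)
    have "F (N + Suc i) \<le> (1 + e (N + i)) * F (N + i)"
      using F_step[of "N + i"] by simp
    also have "\<dots> \<le> exp (e (N + i)) * F (N + i)"
      using F_nonneg[of "N + i"] by (intro mult_right_mono) (simp_all add: add.commute exp_ge_add_one_self)
    also have "\<dots> \<le> exp (e (N + i)) * (F N * exp (\<Sum>j<N + i. e j))"
      using Suc by (simp add: mult_left_mono)
    also have "\<dots> = F N * exp (\<Sum>j<N + Suc i. e j)"
      by (simp add: exp_add)
    finally show ?case .
  qed
  fix j assume "N \<le> j"
  then obtain i where j: "j = N + i" using le_Suc_ex by blast
  have "(\<Sum>j<N + i. e j) \<le> suminf e"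
    using assms(3,4) by (intro sum_le_suminf) auto
  then have "F N * exp (\<Sum>j<N + i. e j) \<le> F N * exp (suminf e)"
    using F_nonneg[of N] by (intro mult_left_mono) auto
  then show "F j \<le> F N * exp (suminf e)"
    using growth[of i] j by simp
qed

lemma summable_energy_defect:
  fixes t :: "nat \<Rightarrow> complex" and \<rho> :: "nat \<Rightarrow> real"
  assumes "summable (\<lambda>j. \<bar>1 - \<rho> j\<bar>)" "summable (\<lambda>j. \<bar>Im (t j)\<bar>)"
    and "bounded_variation (\<lambda>j. Re (t j))"
  shows "summable (\<lambda>j. (Im (t (Suc j)))\<^sup>2 + \<bar>Im (t (Suc j))\<bar> + \<bar>\<rho> (Suc j) * Re (t (Suc j)) - Re (t j)\<bar>)"
proof -
  define M where "M = (\<Sum>j. \<bar>Im (t j)\<bar>)"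
  have M: "\<bar>Im (t j)\<bar> \<le> M" for j
    unfolding M_def using sum_le_suminf[OF assms(2), of "{j}"] by simp
  obtain T where T: "\<And>j. \<bar>Re (t j)\<bar> \<le> T"
    using bounded_variation_bounded[OF assms(3)] by blast
  have "summable (\<lambda>j. (M + 1) * \<bar>Im (t (Suc j))\<bar> + \<bar>Re (t (Suc j)) - Re (t j)\<bar> + T * \<bar>1 - \<rho> (Suc j)\<bar>)"
  proof (intro summable_add summable_mult)
    show "summable (\<lambda>j. \<bar>Im (t (Suc j))\<bar>)" using assms(2) by (subst summable_Suc_iff)
    show "summable (\<lambda>j. \<bar>1 - \<rho> (Suc j)\<bar>)" using assms(1) by (subst summable_Suc_iff)
    show "summable (\<lambda>j. \<bar>Re (t (Suc j)) - Re (t j)\<bar>)"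
      using assms(3) unfolding bounded_variation_def .
  qed
  then show ?thesis
  proof (rule summable_comparison_test'[where N = 0])
    fix j
    define a where "a = Im (t (Suc j))"
    define b where "b = \<bar>\<rho> (Suc j) * Re (t (Suc j)) - Re (t j)\<bar>"
    have "a\<^sup>2 = \<bar>a\<bar> * \<bar>a\<bar>" by (simp add: power2_eq_square)
    also have "\<dots> \<le> M * \<bar>a\<bar>" unfolding a_def by (rule mult_right_mono[OF M]) simp
    finally have a: "a\<^sup>2 \<le> M * \<bar>a\<bar>" .
    have "\<rho> (Suc j) * Re (t (Suc j)) - Re (t j)
        = (Re (t (Suc j)) - Re (t j)) - (1 - \<rho> (Suc j)) * Re (t (Suc j))"
      by (simp add: algebra_simps)
    then have "b \<le> \<bar>Re (t (Suc j)) - Re (t j)\<bar> + \<bar>1 - \<rho> (Suc j)\<bar> * \<bar>Re (t (Suc j))\<bar>"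
      unfolding b_def by (simp add: abs_mult[symmetric] abs_triangle_ineq4)
    also have "\<dots> \<le> \<bar>Re (t (Suc j)) - Re (t j)\<bar> + T * \<bar>1 - \<rho> (Suc j)\<bar>"
      using mult_right_mono[OF T[of "Suc j"] abs_ge_zero[of "1 - \<rho> (Suc j)"]] by (simp add: mult.commute)
    finally have b: "b \<le> \<bar>Re (t (Suc j)) - Re (t j)\<bar> + T * \<bar>1 - \<rho> (Suc j)\<bar>" .
    have "norm (a\<^sup>2 + \<bar>a\<bar> + b) \<le> (M + 1) * \<bar>a\<bar> + \<bar>Re (t (Suc j)) - Re (t j)\<bar> + T * \<bar>1 - \<rho> (Suc j)\<bar>"
      using a b by (simp add: b_def distrib_right)
    then show "norm ((Im (t (Suc j)))\<^sup>2 + \<bar>Im (t (Suc j))\<bar> + \<bar>\<rho> (Suc j) * Re (t (Suc j)) - Re (t j)\<bar>)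
        \<le> (M + 1) * \<bar>Im (t (Suc j))\<bar> + \<bar>Re (t (Suc j)) - Re (t j)\<bar> + T * \<bar>1 - \<rho> (Suc j)\<bar>"
      unfolding a_def b_def .
  qed
qed

text \<open>The energy \<open>F\<^sub>j\<close> below is a perturbation of the conserved quantity of the constant-coefficient
  recurrence \<open>x\<^sub>j\<^sub>+\<^sub>2 + x\<^sub>j + \<tau> x\<^sub>j\<^sub>+\<^sub>1 = 0\<close>; for \<open>|\<tau>| < 2\<close> it is equivalent to
  \<open>|x\<^sub>j\<^sub>+\<^sub>2|\<^sup>2 + |x\<^sub>j\<^sub>+\<^sub>1|\<^sup>2\<close>, and the coefficient conditions make its relative increments summable.\<close>

lemma Bseq_three_term_recurrence:
  fixes x t :: "nat \<Rightarrow> complex" and \<rho> :: "nat \<Rightarrow> real"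
  assumes rec: "\<And>j. N \<le> j \<Longrightarrow> x (Suc (Suc j)) + of_real (\<rho> j) * x j + t j * x (Suc j) = 0"
    and \<rho>: "\<And>j. N \<le> j \<Longrightarrow> 0 \<le> \<rho> j \<and> \<rho> j \<le> 1" "summable (\<lambda>j. \<bar>1 - \<rho> j\<bar>)"
    and Re_t: "0 < \<eta>" "\<And>j. N \<le> j \<Longrightarrow> \<bar>Re (t j)\<bar> \<le> 2 - \<eta>" "bounded_variation (\<lambda>j. Re (t j))"
    and Im_t: "summable (\<lambda>j. \<bar>Im (t j)\<bar>)"
  shows "Bseq x"
proof -
  define G where "G j = (cmod (x (Suc (Suc j))))\<^sup>2 + (cmod (x (Suc j)))\<^sup>2" for j
  define F where "F j = G j + Re (t j) * Re (x (Suc (Suc j)) * cnj (x (Suc j)))" for j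
  define \<epsilon> where "\<epsilon> j = (Im (t (Suc j)))\<^sup>2 + \<bar>Im (t (Suc j))\<bar> + \<bar>\<rho> (Suc j) * Re (t (Suc j)) - Re (t j)\<bar>"
    for j
  have \<epsilon>_nonneg: "0 \<le> \<epsilon> j" for j unfolding \<epsilon>_def by simp
  have G_le_F: "\<eta> / 2 * G j \<le> F j" if "N \<le> j" for j
    unfolding F_def G_def by (rule energy_lower_bound[OF Re_t(2)[OF that]])
  have F_nonneg: "0 \<le> F j" if "N \<le> j" for j
  proof -
    have "0 \<le> \<eta> / 2 * G j" using Re_t(1) by (simp add: G_def)
    then show ?thesis using G_le_F[OF that] by linarith
  qed
  have F_increment: "F (Suc j) \<le> F j + \<epsilon> j * G j" if "N \<le> j" for j
  proof -
    have p: "x (Suc (Suc (Suc j))) = - (t (Suc j) * x (Suc (Suc j)) + of_real (\<rho> (Suc j)) * x (Suc j))"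
      using rec[of "Suc j"] that by (simp add: eq_neg_iff_add_eq_0 algebra_simps)
    have "0 \<le> \<rho> (Suc j)" "\<rho> (Suc j) \<le> 1" using \<rho>(1)[of "Suc j"] that by auto
    from energy_step[OF this, of "t (Suc j)" "x (Suc (Suc j))" "x (Suc j)" "Re (t j)"]
    show ?thesis unfolding F_def G_def \<epsilon>_def p .
  qed
  have F_step: "F (Suc j) \<le> (1 + 2 / \<eta> * \<epsilon> j) * F j" if "N \<le> j" for j
  proof -
    have "G j \<le> 2 / \<eta> * F j"
      using G_le_F[OF that] Re_t(1) by (simp add: field_simps)
    then have "\<epsilon> j * G j \<le> \<epsilon> j * (2 / \<eta> * F j)"
      using \<epsilon>_nonneg by (rule mult_left_mono)
    then show ?thesis
      using F_increment[OF that] by (simp add: algebra_simps)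
  qed
  have "summable (\<lambda>j. 2 / \<eta> * \<epsilon> j)"
    unfolding \<epsilon>_def by (intro summable_mult summable_energy_defect \<rho>(2) Im_t Re_t(3))
  then obtain B where B: "\<And>j. N \<le> j \<Longrightarrow> F j \<le> B"
    using bounded_if_mult_increments_summable[of N F, OF F_nonneg F_step] \<epsilon>_nonneg Re_t(1) by auto
  have "norm (x (j + Suc (Suc N))) \<le> sqrt (2 / \<eta> * B)" for j
  proof -
    have "(cmod (x (j + Suc (Suc N))))\<^sup>2 \<le> G (j + N)"
      unfolding G_def by simp
    also have "\<dots> \<le> 2 / \<eta> * F (j + N)"
      using G_le_F[of "j + N"] Re_t(1) by (simp add: field_simps)
    also have "\<dots> \<le> 2 / \<eta> * B"
      using B[of "j + N"] Re_t(1) by (intro mult_left_mono) auto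
    finally show ?thesis by (simp add: real_le_rsqrt)
  qed
  then have "Bseq (\<lambda>j. x (j + Suc (Suc N)))"
    by (intro BseqI') auto
  then show ?thesis by (rule Bseq_offset)
qed

lemma normalized_recurrence_step:
  fixes u F Y\<^sub>0 Y\<^sub>1 Y\<^sub>2 :: complex and s\<^sub>0 s\<^sub>1 s\<^sub>2 :: real
  assumes "cmod u = 1" "0 < s\<^sub>1"
    and "u * s\<^sub>1\<^sup>2 * Y\<^sub>2 + cnj u * s\<^sub>0\<^sup>2 * Y\<^sub>0 + F * Y\<^sub>1 = 0"
  shows "s\<^sub>2 * Y\<^sub>2 * u ^ Suc (Suc j) + of_real (s\<^sub>0 * s\<^sub>2 / s\<^sub>1\<^sup>2) * (s\<^sub>0 * Y\<^sub>0 * u ^ j)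
       + F * (s\<^sub>2 / s\<^sub>1 ^ 3) * (s\<^sub>1 * Y\<^sub>1 * u ^ Suc j) = 0"
proof -
  have "cnj u * u = 1"
    using assms(1) complex_norm_square[of u] by (simp add: mult.commute)
  then have "s\<^sub>2 * Y\<^sub>2 * u ^ Suc (Suc j) + of_real (s\<^sub>0 * s\<^sub>2 / s\<^sub>1\<^sup>2) * (s\<^sub>0 * Y\<^sub>0 * u ^ j)
       + F * (s\<^sub>2 / s\<^sub>1 ^ 3) * (s\<^sub>1 * Y\<^sub>1 * u ^ Suc j)
      = u ^ Suc j * (s\<^sub>2 / s\<^sub>1\<^sup>2) * (u * s\<^sub>1\<^sup>2 * Y\<^sub>2 + cnj u * s\<^sub>0\<^sup>2 * Y\<^sub>0 + F * Y\<^sub>1)"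
    using assms(2) by (simp add: field_simps power2_eq_square power3_eq_cube)
  then show ?thesis using assms(3) by simp
qed

section \<open>Products of shifted linear factors\<close>

context
  fixes A :: "'i set" and b :: "'i \<Rightarrow> real"
  assumes finite_A: "finite A" and offset_ge_1: "\<And>i. i \<in> A \<Longrightarrow> 1 \<le> b i"
begin

lemma prod_shifted_pos: "0 \<le> x \<Longrightarrow> 0 < (\<Prod>i\<in>A. x + b i)"
  by (intro prod_pos add_nonneg_pos order_less_le_trans[OF zero_less_one offset_ge_1])

lemma prod_shifted_lower: "0 \<le> x \<Longrightarrow> (x + 1) ^ card A \<le> (\<Prod>i\<in>A. x + b i)"
  using prod_mono[of A "\<lambda>_. x + 1" "\<lambda>i. x + b i"] offset_ge_1 by (simp add: finite_A)

lemma prod_shifted_shift_upper: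
  assumes "0 \<le> x" "0 \<le> d"
  shows "(\<Prod>i\<in>A. x + d + b i) \<le> (1 + d) ^ card A * (\<Prod>i\<in>A. x + b i)"
proof -
  have "(\<Prod>i\<in>A. x + d + b i) \<le> (\<Prod>i\<in>A. (1 + d) * (x + b i))"
  proof (rule prod_mono)
    fix i assume "i \<in> A"
    then have "1 \<le> b i" by (rule offset_ge_1)
    then have "d * 1 \<le> d * b i" using assms(2) by (rule mult_left_mono)
    moreover have "0 \<le> d * x" using assms by simp
    moreover have "(1 + d) * (x + b i) = x + b i + d * x + d * b i" by (simp add: algebra_simps)
    ultimately show "0 \<le> x + d + b i \<and> x + d + b i \<le> (1 + d) * (x + b i)"
      using assms \<open>1 \<le> b i\<close> by linarith
  qed
  then show ?thesis by (simp add: prod.distrib finite_A)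
qed

lemma prod_shifted_log_concave:
  assumes "0 \<le> x - d" "0 \<le> d"
  shows "(\<Prod>i\<in>A. x - d + b i) * (\<Prod>i\<in>A. x + d + b i) \<le> (\<Prod>i\<in>A. x + b i)\<^sup>2"
    and "(1 - d\<^sup>2 / (x + 1)\<^sup>2) ^ card A * (\<Prod>i\<in>A. x + b i)\<^sup>2
           \<le> (\<Prod>i\<in>A. x - d + b i) * (\<Prod>i\<in>A. x + d + b i)"
proof -
  define a where "a = d\<^sup>2 / (x + 1)\<^sup>2"
  have x1: "0 < x + 1" using assms by linarith
  have a0: "0 \<le> a" by (simp add: a_def)
  have a: "0 \<le> 1 - a"
    using assms x1 by (simp add: a_def field_simps power_mono)
  have factor: "(x - d + b i) * (x + d + b i) = (x + b i)\<^sup>2 - d\<^sup>2" for i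
    by (simp add: power2_eq_square algebra_simps)
  have "(\<Prod>i\<in>A. x - d + b i) * (\<Prod>i\<in>A. x + d + b i) = (\<Prod>i\<in>A. (x + b i)\<^sup>2 - d\<^sup>2)"
    by (simp add: factor prod.distrib[symmetric])
  moreover have "(\<Prod>i\<in>A. x + b i)\<^sup>2 = (\<Prod>i\<in>A. (x + b i)\<^sup>2)"
    by (simp add: prod_power_distrib)
  moreover have "(1 - a) ^ card A * (\<Prod>i\<in>A. (x + b i)\<^sup>2) = (\<Prod>i\<in>A. (1 - a) * (x + b i)\<^sup>2)"
    by (simp add: prod.distrib)
  moreover have "0 \<le> (1 - a) * (x + b i)\<^sup>2 \<and> (1 - a) * (x + b i)\<^sup>2 \<le> (x + b i)\<^sup>2 - d\<^sup>2"
    and "0 \<le> (x + b i)\<^sup>2 - d\<^sup>2 \<and> (x + b i)\<^sup>2 - d\<^sup>2 \<le> (x + b i)\<^sup>2" if "i \<in> A" for i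
  proof -
    have "x + 1 \<le> x + b i" using offset_ge_1[OF that] by simp
    then have "(x + 1)\<^sup>2 \<le> (x + b i)\<^sup>2" using x1 by (intro power_mono) auto
    moreover have "d\<^sup>2 \<le> (x + 1)\<^sup>2" using assms by (intro power_mono) auto
    ultimately have "d\<^sup>2 \<le> a * (x + b i)\<^sup>2" "d\<^sup>2 \<le> (x + b i)\<^sup>2"
      using x1 by (auto simp: a_def field_simps mult_left_mono)
    then show "0 \<le> (1 - a) * (x + b i)\<^sup>2 \<and> (1 - a) * (x + b i)\<^sup>2 \<le> (x + b i)\<^sup>2 - d\<^sup>2"
      and "0 \<le> (x + b i)\<^sup>2 - d\<^sup>2 \<and> (x + b i)\<^sup>2 - d\<^sup>2 \<le> (x + b i)\<^sup>2"
      using a a0 mult_left_le_one_le[of "(x + b i)\<^sup>2" a] by (auto simp: algebra_simps)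
  qed
  ultimately show "(\<Prod>i\<in>A. x - d + b i) * (\<Prod>i\<in>A. x + d + b i) \<le> (\<Prod>i\<in>A. x + b i)\<^sup>2"
    and "(1 - d\<^sup>2 / (x + 1)\<^sup>2) ^ card A * (\<Prod>i\<in>A. x + b i)\<^sup>2
           \<le> (\<Prod>i\<in>A. x - d + b i) * (\<Prod>i\<in>A. x + d + b i)"
    unfolding a_def[symmetric] by (simp_all add: prod_mono)
qed

lemma prod_shifted_ratio_bounds:
  fixes x d :: real
  assumes "0 \<le> x - d" "0 \<le> d"
  defines "\<rho> \<equiv> (\<Prod>i\<in>A. x - d + b i) powr (1/4) * (\<Prod>i\<in>A. x + d + b i) powr (1/4)
                / ((\<Prod>i\<in>A. x + b i) powr (1/4))\<^sup>2"
  shows "0 \<le> \<rho>" "\<rho> \<le> 1" "1 - \<rho> \<le> real (card A) * d\<^sup>2 / (x + 1)\<^sup>2"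
proof -
  define P where "P y = (\<Prod>i\<in>A. y + b i)" for y
  have P: "(\<Prod>i\<in>A. x - d + b i) = P (x - d)" "(\<Prod>i\<in>A. x + d + b i) = P (x + d)"
    by (simp_all add: P_def add.assoc)
  have pos: "0 < P (x - d)" "0 < P (x + d)" "0 < P x"
    unfolding P_def using assms by (simp_all add: prod_shifted_pos)
  define r where "r = P (x - d) * P (x + d) / (P x)\<^sup>2"
  have "(P x)\<^sup>2 powr (1/4) = (P x powr (1/4))\<^sup>2"
    by (simp add: power2_eq_square powr_mult)
  then have \<rho>_r: "\<rho> = r powr (1/4)"
    unfolding \<rho>_def r_def P P_def[symmetric] by (simp add: powr_mult powr_divide)
  have "(1 - d\<^sup>2 / (x + 1)\<^sup>2) ^ card A \<le> r" and r_le_1: "r \<le> 1"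
    using prod_shifted_log_concave[OF assms(1,2)] pos unfolding r_def P P_def[symmetric]
    by (simp_all add: field_simps)
  moreover have "1 - card A * (d\<^sup>2 / (x + 1)\<^sup>2) \<le> (1 - d\<^sup>2 / (x + 1)\<^sup>2) ^ card A"
    using Bernoulli_inequality[of "- (d\<^sup>2 / (x + 1)\<^sup>2)" "card A"] assms
    by (simp add: power_mono divide_le_eq_1)
  moreover have "r \<le> \<rho>"
    using powr_mono'[of "1/4" 1 r] pos r_le_1 unfolding \<rho>_r r_def by simp
  ultimately show "1 - \<rho> \<le> real (card A) * d\<^sup>2 / (x + 1)\<^sup>2" by simp
  show "0 \<le> \<rho>" unfolding \<rho>_r by simp
  show "\<rho> \<le> 1" unfolding \<rho>_r using pos r_le_1 by (intro powr_le1) (auto simp: r_def)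
qed

lemma prod_shifted_sqrt_lower:
  assumes "0 \<le> x"
  shows "(x + 1) powr (card A / 2) \<le> ((\<Prod>i\<in>A. x + b i) powr (1/4))\<^sup>2"
proof -
  have "(x + 1) powr (card A / 2) = ((x + 1) ^ card A) powr (1/2)"
    using assms by (simp add: powr_realpow[symmetric] powr_powr)
  also have "\<dots> \<le> (\<Prod>i\<in>A. x + b i) powr (1/2)"
    using assms prod_shifted_lower by (intro powr_mono2) auto
  also have "\<dots> = ((\<Prod>i\<in>A. x + b i) powr (1/4))\<^sup>2"
    using prod_shifted_pos[OF assms] by (simp add: powr_power)
  finally show ?thesis .
qed

lemma prod_shifted_decay_bound:
  fixes x d :: real
  assumes "0 \<le> x" "0 \<le> d"
  shows "(\<Prod>i\<in>A. x + d + b i) powr (1/4) / ((\<Prod>i\<in>A. x + b i) powr (1/4)) ^ 3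
           \<le> (1 + d) powr (card A / 4) * (x + 1) powr (- (card A / 2))"
proof -
  define P where "P y = (\<Prod>i\<in>A. y + b i)" for y
  have pos: "0 < P (x + d)" "0 < P x"
    unfolding P_def using assms by (simp_all add: prod_shifted_pos)
  have "P (x + d) powr (1/4) / (P x powr (1/4)) ^ 3
      = (P (x + d) / P x) powr (1/4) * inverse ((P x powr (1/4))\<^sup>2)"
  proof -
    have "a / q ^ 3 = a / q * inverse (q\<^sup>2)" for a q :: real
      by (cases "q = 0") (simp_all add: field_simps eval_nat_numeral)
    then show ?thesis by (simp only: powr_divide)
  qed
  also have "\<dots> \<le> ((1 + d) ^ card A) powr (1/4) * inverse ((x + 1) powr (card A / 2))"
  proof (rule mult_mono)
    have "P (x + d) \<le> (1 + d) ^ card A * P x"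
      unfolding P_def by (rule prod_shifted_shift_upper[OF assms])
    then have "P (x + d) / P x \<le> (1 + d) ^ card A"
      using pos(2) by (simp add: pos_divide_le_eq)
    then show "(P (x + d) / P x) powr (1/4) \<le> ((1 + d) ^ card A) powr (1/4)"
      using pos by (intro powr_mono2) auto
    have "(x + 1) powr (card A / 2) \<le> (P x powr (1/4))\<^sup>2"
      unfolding P_def by (rule prod_shifted_sqrt_lower[OF assms(1)])
    then show "inverse ((P x powr (1/4))\<^sup>2) \<le> inverse ((x + 1) powr (card A / 2))"
      using assms by (intro le_imp_inverse_le) auto
  qed simp_all
  also have "\<dots> = (1 + d) powr (card A / 4) * (x + 1) powr (- (card A / 2))"
  proof -
    have "(1 + d) ^ card A = (1 + d) powr real (card A)"
      using assms by (subst powr_realpow) auto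
    then have "((1 + d) ^ card A) powr (1/4) = (1 + d) powr (card A / 4)"
      by (simp only: powr_powr) simp
    then show ?thesis by (simp only: powr_minus)
  qed
  finally show ?thesis unfolding P_def .
qed

lemma prod_shifted_scaled_decay_eq_prod:
  fixes x d L :: real
  assumes "0 \<le> x" "0 \<le> d" "0 < x + L"
  shows "(x + L) powr (card A / 2)
           * ((\<Prod>i\<in>A. x + d + b i) powr (1/4) / ((\<Prod>i\<in>A. x + b i) powr (1/4)) ^ 3)
         = (\<Prod>i\<in>A. ((x + d + b i) / (x + L)) powr (1/4) * ((x + L) / (x + b i)) powr (3/4))"
proof -
  have pos: "0 < x + b i" "0 < x + d + b i" if "i \<in> A" for i
    using assms offset_ge_1[OF that] by linarith+
  have factor: "((x + d + b i) / (x + L)) powr (1/4) * ((x + L) / (x + b i)) powr (3/4)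
      = (x + L) powr (1/2) * ((x + d + b i) powr (1/4) / (x + b i) powr (3/4))" if "i \<in> A" for i
  proof -
    have "(x + L) powr (3/4) = (x + L) powr (1/2) * (x + L) powr (1/4)"
      by (simp add: powr_add[symmetric])
    then show ?thesis
      using assms(3) pos[OF that] by (simp add: powr_divide field_simps)
  qed
  have "(x + L) powr (card A / 2) = (\<Prod>i\<in>A. (x + L) powr (1/2))"
    using assms(3) powr_sum[of "x + L" "\<lambda>_. 1/2" A] by simp
  moreover have "((\<Prod>i\<in>A. x + b i) powr (1/4)) ^ 3 = (\<Prod>i\<in>A. x + b i) powr (3/4)"
    using prod_shifted_pos[OF assms(1)] by (simp add: powr_power)
  moreover have "(\<Prod>i\<in>A. x + b i) powr (3/4) = (\<Prod>i\<in>A. (x + b i) powr (3/4))"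
    by (rule prod_powr_distrib)
  moreover have "(\<Prod>i\<in>A. x + d + b i) powr (1/4) = (\<Prod>i\<in>A. (x + d + b i) powr (1/4))"
    by (rule prod_powr_distrib)
  ultimately show ?thesis
    by (simp add: factor prod.distrib prod_dividef)
qed

context
  fixes X :: "nat \<Rightarrow> real" and d :: real
  assumes X_step: "\<And>j. X (Suc j) = X j + d" and X_0: "0 \<le> X 0" and d_ge_1: "1 \<le> d"
begin

lemma prod_shifted_progression_ratio:
  defines "s j \<equiv> (\<Prod>i\<in>A. X j + b i) powr (1/4)"
  shows "0 \<le> s j * s (Suc (Suc j)) / (s (Suc j))\<^sup>2 \<and> s j * s (Suc (Suc j)) / (s (Suc j))\<^sup>2 \<le> 1"
    and "summable (\<lambda>j. \<bar>1 - s j * s (Suc (Suc j)) / (s (Suc j))\<^sup>2\<bar>)"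
proof -
  have X: "real j \<le> X j" for j by (rule progression_ge[OF X_step X_0 d_ge_1])
  have shift: "X j = X (Suc j) - d" "X (Suc (Suc j)) = X (Suc j) + d" for j
    by (simp_all add: X_step)
  have bounds: "0 \<le> s j * s (Suc (Suc j)) / (s (Suc j))\<^sup>2 \<and> s j * s (Suc (Suc j)) / (s (Suc j))\<^sup>2 \<le> 1
      \<and> 1 - s j * s (Suc (Suc j)) / (s (Suc j))\<^sup>2 \<le> real (card A) * d\<^sup>2 / (X (Suc j) + 1)\<^sup>2" for j
    using prod_shifted_ratio_bounds[of "X (Suc j)" d] X[of j] X_0 X_step d_ge_1
    unfolding s_def shift(1)[of j] shift(2)[of j] by simp
  then show "0 \<le> s j * s (Suc (Suc j)) / (s (Suc j))\<^sup>2 \<and> s j * s (Suc (Suc j)) / (s (Suc j))\<^sup>2 \<le> 1"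
    by blast
  show "summable (\<lambda>j. \<bar>1 - s j * s (Suc (Suc j)) / (s (Suc j))\<^sup>2\<bar>)"
  proof (rule summable_comparison_test'[OF summable_mult[OF summable_real_Suc_powr[of 2]]])
    fix j
    have "(real j + 1)\<^sup>2 \<le> (X (Suc j) + 1)\<^sup>2"
      using X[of "Suc j"] by (intro power_mono) auto
    moreover have "0 < (X (Suc j) + 1)\<^sup>2 * (real j + 1)\<^sup>2"
      using X[of "Suc j"] by (intro mult_pos_pos) auto
    ultimately have "real (card A) * d\<^sup>2 / (X (Suc j) + 1)\<^sup>2 \<le> real (card A) * d\<^sup>2 / (real j + 1)\<^sup>2"
      by (intro divide_left_mono) auto
    also have "\<dots> = real (card A) * d\<^sup>2 * (real j + 1) powr (- 2)"
      by (simp add: powr_minus powr_realpow divide_inverse)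
    finally show "norm \<bar>1 - s j * s (Suc (Suc j)) / (s (Suc j))\<^sup>2\<bar> \<le> real (card A) * d\<^sup>2 * (real j + 1) powr (- 2)"
      using bounds[of j] by simp
  qed simp
qed

lemma prod_shifted_progression_decay:
  assumes "3 \<le> card A"
  defines "s j \<equiv> (\<Prod>i\<in>A. X j + b i) powr (1/4)"
  shows "summable (\<lambda>j. s (Suc (Suc j)) / s (Suc j) ^ 3)"
proof (rule summable_comparison_test'[OF summable_mult[OF summable_real_Suc_powr[of "3/2"]]])
  fix j
  have X: "real (Suc j) \<le> X (Suc j)" by (rule progression_ge[OF X_step X_0 d_ge_1])
  have "s (Suc (Suc j)) / s (Suc j) ^ 3 \<le> (1 + d) powr (card A / 4) * (X (Suc j) + 1) powr (- (card A / 2))"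
    using prod_shifted_decay_bound[of "X (Suc j)" d] X X_step d_ge_1 unfolding s_def by simp
  also have "\<dots> \<le> (1 + d) powr (card A / 4) * (real j + 1) powr (- (3/2))"
  proof (intro mult_left_mono)
    have "(X (Suc j) + 1) powr (- (card A / 2)) \<le> (X (Suc j) + 1) powr (- (3/2))"
      using X assms(1) by (intro powr_mono) auto
    also have "\<dots> \<le> (real j + 1) powr (- (3/2))"
      using X by (intro powr_mono2') auto
    finally show "(X (Suc j) + 1) powr (- (card A / 2)) \<le> (real j + 1) powr (- (3/2))" .
  qed simp
  finally show "norm (s (Suc (Suc j)) / s (Suc j) ^ 3) \<le> (1 + d) powr (card A / 4) * (real j + 1) powr (- (3/2))"
    unfolding s_def by simp
qed simp

lemma prod_shifted_progression_scaled_decay: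
  assumes "0 \<le> L"
  defines "s j \<equiv> (\<Prod>i\<in>A. X j + b i) powr (1/4)"
  defines "h j \<equiv> (X (Suc j) + L) powr (card A / 2) * (s (Suc (Suc j)) / s (Suc j) ^ 3)"
  shows "bounded_variation h" "h \<longlonglongrightarrow> 1"
proof -
  have X: "1 \<le> X (Suc j)" for j
    using progression_ge[OF X_step X_0 d_ge_1, of "Suc j"] by simp
  have h: "h j = (\<Prod>i\<in>A. ((X (Suc j) + (d + b i)) / (X (Suc j) + L)) powr (1/4)
      * ((X (Suc j) + L) / (X (Suc j) + b i)) powr (3/4))" for j
    using prod_shifted_scaled_decay_eq_prod[of "X (Suc j)" d L] X[of j] assms(1) d_ge_1
    unfolding h_def s_def X_step[of "Suc j"] by (simp add: add.assoc)
  have mono: "X (Suc j) \<le> X (Suc (Suc j))" for j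
    using X_step[of "Suc j"] d_ge_1 by simp
  have "real j \<le> X (Suc j)" for j using X[of j] progression_ge[OF X_step X_0 d_ge_1, of "Suc j"] by simp
  then have top: "filterlim (\<lambda>j. X (Suc j)) at_top sequentially"
    by (rule filterlim_at_top_if_real_le)
  have pos: "0 < X (Suc j) + L" "0 < X (Suc j) + b i" "0 \<le> X (Suc 0) + (d + b i)"
    "0 \<le> X (Suc 0) + L" if "i \<in> A" for i j
    using X[of j] X[of 0] assms(1) d_ge_1 offset_ge_1[OF that] by linarith+
  show "bounded_variation h"
    unfolding h using mono pos
    by (intro bounded_variation_prod bounded_variation_mult bounded_variation_ratio_powr) auto
  have "h \<longlonglongrightarrow> (\<Prod>i\<in>A. 1 powr (1/4) * 1 powr (3/4))"
    unfolding h
    by (intro tendsto_prod tendsto_mult tendsto_powr' tendsto_ratio_shift top tendsto_const) auto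
  then show "h \<longlonglongrightarrow> 1" by simp
qed

lemma prod_shifted_progression_lower:
  defines "s j \<equiv> (\<Prod>i\<in>A. X j + b i) powr (1/4)"
  shows "(X j + 1) powr (card A / 2) \<le> (s j)\<^sup>2"
  unfolding s_def using prod_shifted_sqrt_lower progression_ge[OF X_step X_0 d_ge_1, of j] by simp

end

end

section \<open>Square summability of the solutions\<close>

lemma hop_weight_eq_prod:
  "hop_weight k l x = (\<Prod>i\<in>{..<k} <+> {..<l}. x + (1 + real (case_sum id id i)))"
  unfolding hop_weight_def pochhammer_prod
  by (simp add: prod.Plus atLeast0LessThan comp_def add_ac)

lemma hop_weight_progression:
  fixes k l :: nat and X :: "nat \<Rightarrow> real" and d :: real
  assumes X: "\<And>j. X (Suc j) = X j + d" "0 \<le> X 0" "1 \<le> d"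
  defines "s j \<equiv> hop_weight k l (X j) powr (1/4)"
  shows "0 < s j" "(s j)\<^sup>2 = sqrt (hop_weight k l (X j))"
    and "(X j + 1) powr (real (k + l) / 2) \<le> (s j)\<^sup>2"
    and "0 \<le> s j * s (Suc (Suc j)) / (s (Suc j))\<^sup>2 \<and> s j * s (Suc (Suc j)) / (s (Suc j))\<^sup>2 \<le> 1"
    and "summable (\<lambda>j. \<bar>1 - s j * s (Suc (Suc j)) / (s (Suc j))\<^sup>2\<bar>)"
    and "3 \<le> k + l \<Longrightarrow> summable (\<lambda>j. s (Suc (Suc j)) / s (Suc j) ^ 3)"
    and "0 \<le> L \<Longrightarrow>
      bounded_variation (\<lambda>j. (X (Suc j) + L) powr (real (k + l) / 2) * (s (Suc (Suc j)) / s (Suc j) ^ 3))"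
    and "0 \<le> L \<Longrightarrow>
      (\<lambda>j. (X (Suc j) + L) powr (real (k + l) / 2) * (s (Suc (Suc j)) / s (Suc j) ^ 3)) \<longlonglongrightarrow> 1"
proof -
  define I where "I = {..<k} <+> {..<l}"
  define b where "b i = 1 + real (case_sum id id i)" for i :: "nat + nat"
  have I: "finite I" "\<And>i. i \<in> I \<Longrightarrow> 1 \<le> b i" and card_I: "card I = k + l"
    unfolding I_def b_def by (auto simp: card_Plus)
  have s: "s j = (\<Prod>i\<in>I. X j + b i) powr (1/4)" for j
    unfolding s_def hop_weight_eq_prod I_def b_def ..
  show "0 < s j" "(s j)\<^sup>2 = sqrt (hop_weight k l (X j))"
    using hop_weight_pos[of "X j" k l] progression_ge[OF X, of j] unfolding s_def
    by (simp_all add: powr_power powr_half_sqrt[symmetric])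
  show "(X j + 1) powr (real (k + l) / 2) \<le> (s j)\<^sup>2"
    using prod_shifted_progression_lower[where A = I and b = b, OF I X] unfolding s card_I by simp
  show "0 \<le> s j * s (Suc (Suc j)) / (s (Suc j))\<^sup>2 \<and> s j * s (Suc (Suc j)) / (s (Suc j))\<^sup>2 \<le> 1"
    and "summable (\<lambda>j. \<bar>1 - s j * s (Suc (Suc j)) / (s (Suc j))\<^sup>2\<bar>)"
    using prod_shifted_progression_ratio[where A = I and b = b, OF I X] unfolding s by blast+
  show "summable (\<lambda>j. s (Suc (Suc j)) / s (Suc j) ^ 3)" if "3 \<le> k + l"
    using prod_shifted_progression_decay[where A = I and b = b, OF I X] that unfolding s card_I by simp
  show "bounded_variation (\<lambda>j. (X (Suc j) + L) powr (real (k + l) / 2) * (s (Suc (Suc j)) / s (Suc j) ^ 3))"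
    and "(\<lambda>j. (X (Suc j) + L) powr (real (k + l) / 2) * (s (Suc (Suc j)) / s (Suc j) ^ 3)) \<longlonglongrightarrow> 1"
    if "0 \<le> L"
    using prod_shifted_progression_scaled_decay[where A = I and b = b, OF I X that] unfolding s card_I by simp_all
qed

text \<open>Along the residue class, the diagonal coefficient \<open>f\<close> divided by the normalising weight
  factors as \<open>f(n) n\<^bsup>-(k+l)/2\<^esup>\<close>, which the expansion controls, times a product of ratios of
  shifted linear factors, which tends to \<open>1\<close> monotonically.\<close>

lemma progression_coefficient_asymptotics:
  fixes k l r :: nat and f :: "nat \<Rightarrow> real"
  assumes "l < k"
    and expansion: "has_asymp_expansion (\<lambda>n. f n * real n powr (- real (k + l) / 2)) lam"
  defines "d \<equiv> k - l"
  defines "s j \<equiv> hop_weight k l (real (r + j * d)) powr (1/4)"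
  defines "a j \<equiv> f (l + r + Suc j * d) * (s (Suc (Suc j)) / s (Suc j) ^ 3)"
  shows "bounded_variation a" "a \<longlonglongrightarrow> lam 0"
proof -
  define X where "X j = real (r + j * d)" for j
  have X: "\<And>j. X (Suc j) = X j + real d" "0 \<le> X 0" "1 \<le> real d"
    unfolding X_def d_def using assms(1) by auto
  define M where "M j = l + r + Suc j * d" for j
  have M: "real (M j) = X (Suc j) + real l" "real j + 1 \<le> real (M j)" "M j \<le> M (Suc j)" for j
    using progression_ge[OF X, of "Suc j"] unfolding M_def X_def by simp_all
  define g where "g n = f n * real n powr (- real (k + l) / 2)" for n
  define h where "h j = (X (Suc j) + real l) powr (real (k + l) / 2) * (s (Suc (Suc j)) / s (Suc j) ^ 3)"
    for j
  have "a = (\<lambda>j. g (M j) * h j)"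
  proof
    fix j
    have cancel: "z powr (- e / 2) * z powr (e / 2) = 1" if "0 < z" for z e :: real
      using that by (simp add: powr_add[symmetric])
    have "0 < real (M j)" using M(2)[of j] by simp
    from cancel[OF this, of "real (k + l)"] show "a j = g (M j) * h j"
      unfolding a_def g_def h_def M(1)[symmetric] M_def by (simp add: mult_ac)
  qed
  moreover have "bounded_variation h" "h \<longlonglongrightarrow> 1"
    using hop_weight_progression(7,8)[where k = k and l = l and L = "real l", OF X] unfolding h_def s_def X_def by simp_all
  moreover have "bounded_variation (\<lambda>j. g (M j))" "(\<lambda>j. g (M j)) \<longlonglongrightarrow> lam 0"
    using has_asymp_expansion_along[of g lam M] expansion M(2,3) unfolding g_def by simp_all
  ultimately show "bounded_variation a" "a \<longlonglongrightarrow> lam 0"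
    using bounded_variation_mult tendsto_mult[of "\<lambda>j. g (M j)" "lam 0" _ h 1] by simp_all
qed

text \<open>The substitution \<open>x\<^sub>j = s\<^sub>j Y\<^sub>j \<xi>\<^sup>-\<^sup>j\<close>, where \<open>s\<^sub>j\<^sup>2\<close> is the matrix entry, puts the recurrence
  along a residue class into the form treated by the energy estimate.\<close>

lemma Bseq_normalized_solution:
  fixes k l r :: nat
  assumes "l < k" "3 \<le> k + l" "\<forall>n. 0 \<le> f n"
    and expansion: "has_asymp_expansion (\<lambda>n. f n * real n powr (- real (k + l) / 2)) lam"
    and "lam 0 < 2" "Re c = 0"
    and sol: "\<forall>m. opA k l \<theta> f y m + cnj c * y m = 0"
  defines "d \<equiv> k - l"
  defines "s j \<equiv> hop_weight k l (real (r + j * d)) powr (1/4)"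
  shows "Bseq (\<lambda>j. s j * y (l + r + j * d) * cnj (cis \<theta>) ^ j)"
proof -
  define X where "X j = real (r + j * d)" for j
  have X: "\<And>j. X (Suc j) = X j + real d" "0 \<le> X 0" "1 \<le> real d"
    unfolding X_def d_def using assms(1) by auto
  have s: "s j = hop_weight k l (X j) powr (1/4)" for j unfolding s_def X_def ..
  note s_props = hop_weight_progression[where k = k and l = l, OF X, unfolded s[symmetric]]
  define Y where "Y j = y (l + r + j * d)" for j
  define \<rho> where "\<rho> j = s j * s (Suc (Suc j)) / (s (Suc j))\<^sup>2" for j
  define w where "w j = s (Suc (Suc j)) / s (Suc j) ^ 3" for j
  define t where "t j = (f (l + r + Suc j * d) + cnj c) * w j" for j
  have rec_Y: "cnj (cis \<theta>) * of_real ((s (Suc j))\<^sup>2) * Y (Suc (Suc j))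
      + cnj (cnj (cis \<theta>)) * of_real ((s j)\<^sup>2) * Y j
      + (f (l + r + Suc j * d) + cnj c) * Y (Suc j) = 0" for j
    using opA_solution_progression[OF assms(1) sol, of r j]
    unfolding d_def[symmetric] X_def[symmetric] s_props(2)[symmetric] Y_def[symmetric] by simp
  have rec: "x (Suc (Suc j)) + of_real (\<rho> j) * x j + t j * x (Suc j) = 0"
    if "x = (\<lambda>j. s j * Y j * cnj (cis \<theta>) ^ j)" for x j
    using normalized_recurrence_step[where u = "cnj (cis \<theta>)" and F = "f (l + r + Suc j * d) + cnj c"
        and s\<^sub>0 = "s j" and s\<^sub>1 = "s (Suc j)" and s\<^sub>2 = "s (Suc (Suc j))"
        and Y\<^sub>0 = "Y j" and Y\<^sub>1 = "Y (Suc j)" and Y\<^sub>2 = "Y (Suc (Suc j))" and j = j,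
        OF _ s_props(1) rec_Y]
    unfolding that \<rho>_def t_def w_def by (simp add: mult_ac)
  have w_nonneg: "0 \<le> w j" for j
    unfolding w_def using s_props(1)[of "Suc j"] s_props(1)[of "Suc (Suc j)"] by simp
  have "summable w"
    using s_props(6) assms(2) unfolding w_def by simp
  moreover have "\<bar>Im (t j)\<bar> = \<bar>Im c\<bar> * w j" for j
    unfolding t_def using w_nonneg[of j] by (simp add: abs_mult)
  ultimately have Im_t: "summable (\<lambda>j. \<bar>Im (t j)\<bar>)"
    by (simp add: summable_mult)
  have Re_t: "bounded_variation (\<lambda>j. Re (t j))" "(\<lambda>j. Re (t j)) \<longlonglongrightarrow> lam 0"
    using progression_coefficient_asymptotics[OF assms(1) expansion, of r] \<open>Re c = 0\<close>
    unfolding t_def w_def s_def d_def by simp_all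
  define \<eta> where "\<eta> = (2 - lam 0) / 2"
  have "0 < \<eta>" and "lam 0 < 2 - \<eta>" unfolding \<eta>_def using \<open>lam 0 < 2\<close> by (simp_all add: field_simps)
  have "\<forall>\<^sub>F j in sequentially. Re (t j) < 2 - \<eta>"
    using Re_t(2) \<open>lam 0 < 2 - \<eta>\<close> by (rule order_tendstoD(2))
  then obtain N where N: "\<And>j. N \<le> j \<Longrightarrow> Re (t j) < 2 - \<eta>"
    unfolding eventually_sequentially by blast
  have "\<bar>Re (t j)\<bar> \<le> 2 - \<eta>" if "N \<le> j" for j
    using N[OF that] w_nonneg[of j] \<open>\<forall>n. 0 \<le> f n\<close> \<open>Re c = 0\<close> unfolding t_def by simp
  then show ?thesis
    using Bseq_three_term_recurrence[OF rec[OF refl] _ s_props(5)[folded \<rho>_def] \<open>0 < \<eta>\<close> _ Re_t(1) Im_t]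
      s_props(4) unfolding \<rho>_def Y_def by blast
qed

lemma solution_progression_decay:
  assumes "l < k" "3 \<le> k + l" "\<forall>n. 0 \<le> f n"
    and "has_asymp_expansion (\<lambda>n. f n * real n powr (- real (k + l) / 2)) lam"
    and "lam 0 < 2" "Re c = 0"
    and "\<forall>m. opA k l \<theta> f y m + cnj c * y m = 0"
  shows "\<exists>C. \<forall>j. (cmod (y (l + r + j * (k - l))))\<^sup>2 \<le> C * (real (r + j * (k - l)) + 1) powr (- 3/2)"
proof -
  define d where "d = k - l"
  define X where "X j = real (r + j * d)" for j
  have X: "\<And>j. X (Suc j) = X j + real d" "0 \<le> X 0" "1 \<le> real d"
    unfolding X_def d_def using assms(1) by auto
  define s where "s j = hop_weight k l (X j) powr (1/4)" for j
  have s_pos: "0 < s j" for j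
    unfolding s_def by (rule hop_weight_progression(1)[OF X])
  obtain B where B: "\<And>j. cmod (s j * y (l + r + j * d) * cnj (cis \<theta>) ^ j) \<le> B"
    using Bseq_normalized_solution[OF assms, of r] unfolding Bseq_def s_def X_def d_def by auto
  show ?thesis
  proof (intro exI allI)
    fix j
    have "(X j + 1) powr (3/2) \<le> (X j + 1) powr (real (k + l) / 2)"
      using assms(2) progression_ge[OF X, of j] by (intro powr_mono) auto
    also have "\<dots> \<le> (s j)\<^sup>2"
      using hop_weight_progression(3)[OF X] unfolding s_def .
    finally have "(X j + 1) powr (3/2) * (cmod (y (l + r + j * d)))\<^sup>2 \<le> (s j * cmod (y (l + r + j * d)))\<^sup>2"
      by (simp add: power_mult_distrib mult_right_mono)
    also have "\<dots> \<le> B\<^sup>2"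
    proof (rule power_mono)
      show "s j * cmod (y (l + r + j * d)) \<le> B"
        using B[of j] s_pos[of j] by (simp add: norm_mult norm_power)
    qed (use s_pos[of j] in simp)
    finally show "(cmod (y (l + r + j * (k - l))))\<^sup>2 \<le> B\<^sup>2 * (real (r + j * (k - l)) + 1) powr (- 3/2)"
      using progression_ge[OF X, of j] unfolding X_def d_def by (simp add: powr_minus field_simps)
  qed
qed

lemma l2_if_progression_bounds:
  fixes y :: "nat \<Rightarrow> complex"
  assumes "0 < d" "1 < p"
    and bound: "\<And>r. r < d \<Longrightarrow> \<exists>C. \<forall>j. (cmod (y (l + r + j * d)))\<^sup>2 \<le> C * (real (r + j * d) + 1) powr (- p)"
  shows "y \<in> l2"
proof -
  have "\<forall>r. \<exists>C. r < d \<longrightarrow> (\<forall>j. (cmod (y (l + r + j * d)))\<^sup>2 \<le> C * (real (r + j * d) + 1) powr (- p))"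
    using bound by blast
  then have "\<exists>C. \<forall>r. r < d \<longrightarrow> (\<forall>j. (cmod (y (l + r + j * d)))\<^sup>2 \<le> C r * (real (r + j * d) + 1) powr (- p))"
    by (rule choice)
  then obtain C where C: "\<And>r j. r < d \<Longrightarrow> (cmod (y (l + r + j * d)))\<^sup>2 \<le> C r * (real (r + j * d) + 1) powr (- p)"
    by blast
  define C\<^sub>0 where "C\<^sub>0 = (\<Sum>r<d. \<bar>C r\<bar>)"
  have y_bound: "(cmod (y n))\<^sup>2 \<le> C\<^sub>0 * (real (n - l) + 1) powr (- p)" if "l \<le> n" for n
  proof -
    define r where "r = (n - l) mod d"
    define j where "j = (n - l) div d"
    have r: "r < d" "l + r + j * d = n" "r + j * d = n - l"
      using that assms(1) unfolding r_def j_def by auto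
    have "(cmod (y n))\<^sup>2 \<le> C r * (real (n - l) + 1) powr (- p)"
      using C[OF r(1), of j] unfolding r(2,3) .
    also have "\<dots> \<le> C\<^sub>0 * (real (n - l) + 1) powr (- p)"
    proof (rule mult_right_mono)
      have "\<bar>C r\<bar> \<le> C\<^sub>0" unfolding C\<^sub>0_def using r(1) by (intro member_le_sum) auto
      then show "C r \<le> C\<^sub>0" by linarith
    qed simp
    finally show ?thesis .
  qed
  have "summable (\<lambda>n. C\<^sub>0 * (real (n - l) + 1) powr (- p))"
  proof -
    have "summable (\<lambda>n. C\<^sub>0 * (real (n + l - l) + 1) powr (- p))"
      using summable_real_Suc_powr[OF assms(2)] by (simp add: summable_mult)
    then show ?thesis by (subst summable_iff_shift[symmetric, of _ l])
  qed
  then have "summable (\<lambda>n. (cmod (y n))\<^sup>2)"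
  proof (rule summable_comparison_test')
    show "norm ((cmod (y n))\<^sup>2) \<le> C\<^sub>0 * (real (n - l) + 1) powr (- p)" if "l \<le> n" for n
      using y_bound[OF that] by simp
  qed
  then show ?thesis unfolding l2_def by simp
qed

theorem corollary4p17:
  fixes k l :: nat and \<theta> :: real and f :: "nat \<Rightarrow> real" and lam :: "nat \<Rightarrow> real"
  assumes "k > l" and "k + l \<ge> 3"
    and "\<forall>n. f n \<ge> 0"
    and "has_asymp_expansion (\<lambda>n. f n * real n powr (- real (k + l) / 2)) lam"
    and "lam 0 < 2"
  shows "def_plus (opA k l \<theta> f) = k - l \<and> def_minus (opA k l \<theta> f) = k - l"
proof -
  have square_summable: "y \<in> l2"
    if c: "Re c = 0" and sol: "\<forall>m. opA k l \<theta> f y m + cnj c * y m = 0" for c y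
    using solution_progression_decay[OF assms c sol] assms(1)
    by (intro l2_if_progression_bounds[where d = "k - l" and p = "3/2"]) auto
  show ?thesis
    unfolding def_plus_def def_minus_def
    using dim_range_perp_opA[OF assms(1), of "\<i>"] dim_range_perp_opA[OF assms(1), of "- \<i>"]
      square_summable[of "\<i>"] square_summable[of "- \<i>"]
    by simp
qed

end
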